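(* Let $X$ be a finite $d$-dimensional CW-complex with set $S_d$ of (oriented) $d$-cells, and let $V_0\subset S_d$ be a spanning forest of $X$. Let $N=|S_d-V_0|$ and enumerate $S_d-V_0$ as $e_1,\dots,e_N$. Then $$\det((U+1)\,Id-Mesh(X;\{z(e_a)\},geometric))=\det(U\,Id-Mesh^\#(X;\{z(e_a)\},geometric))=U^N+\sum_{j=1}^N(-1)^j c_j U^{N-j},$$ where $$c_j=\sum_{V}\left(\frac{t_{d-1}(X_V)}{t_{d-1}(X_{V_0})}\right)^2,$$ the sum being over all spanning forests $V$ of $X$ with $|V\cap(S_d-V_0)|=j$.
   Context: $X^{d-1}$ is the $(d-1)$-skeleton, and for $V\subset S_d$, $X_V=X^{d-1}\cup V$. $C_d(\cdot;\mathbb R)$ denotes cellular chains, with the inner product making the oriented $d$-cells orthonormal; $\partial_d$ is the cellular boundary and $B_{d-1}$ the $(d-1)$-boundaries. A subset $V\subset S_d$ is a spanning forest of $X$ if the composite $C_d(X_V;\mathbb R)\xrightarrow{\partial_d}B_{d-1}(X_V;\mathbb R)\subset B_{d-1}(X;\mathbb R)$ is an isomorphism. For a finite CW complex $Y$, $t_{d-1}(Y)$ is the order of the torsion subgroup of $H_{d-1}(Y;\mathbb Z)$. Given the spanning forest $V_0$, for each $e\in S_d-V_0$ there is a unique $D(e)\in C_d(X_{V_0};\mathbb R)$ with $\partial_d D(e)=\partial_d e$; put $z(e)=e-D(e)\in Z_d(X;\mathbb R)$ (the geometric basis of $Z_d(X;\mathbb R)$). Then $Mesh(X;\{z(e_a)\},geometric)=(\langle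 z(e_a),z(e_b)\rangle)_{a,b=1}^N$, which equals $Id+Mesh^\#(X;\{z(e_a)\},geometric)$ with $Mesh^\#(X;\{z(e_a)\},geometric)=(\langle D(e_a),D(e_b)\rangle)_{a,b=1}^N$. *)

theory Defs
  imports "Jordan_Normal_Form.Determinant"
begin

(* A finite d-dimensional CW complex X is represented by its cellular chain data
   in degrees d, d-1, d-2:
     'd  = finite type of (oriented) d-cells      (S_d)
     'e  = finite type of (oriented) (d-1)-cells  (S_{d-1})
     'f  = finite type of (oriented) (d-2)-cells  (S_{d-2})
     bd  :: 'd => 'e => int   cellular boundary matrix of degree d
             (bd s t = incidence number of (d-1)-cell t in the boundary of d-cell s)
     bd' :: 'e => 'f => int   cellular boundary matrix of degree d-1.
   Chains are functions from cells to coefficients. *)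

definition supported_on :: "('d \<Rightarrow> 'a::zero) \<Rightarrow> 'd set \<Rightarrow> bool" where
  "supported_on c V \<longleftrightarrow> (\<forall>s. s \<notin> V \<longrightarrow> c s = 0)"

definition rbdry :: "('d::finite \<Rightarrow> 'e \<Rightarrow> int) \<Rightarrow> ('d \<Rightarrow> real) \<Rightarrow> ('e \<Rightarrow> real)" where
  "rbdry bd c = (\<lambda>t. \<Sum>s\<in>UNIV. c s * real_of_int (bd s t))"

definition ibdry :: "('d::finite \<Rightarrow> 'e \<Rightarrow> int) \<Rightarrow> ('d \<Rightarrow> int) \<Rightarrow> ('e \<Rightarrow> int)" where
  "ibdry bd c = (\<lambda>t. \<Sum>s\<in>UNIV. c s * bd s t)"

definition cinner :: "('d::finite \<Rightarrow> real) \<Rightarrow> ('d \<Rightarrow> real) \<Rightarrow> real" where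
  "cinner c c' = (\<Sum>s\<in>UNIV. c s * c' s)"

(* V is a spanning forest: C_d(X_V;R) --bd--> B_{d-1}(X_V;R) \<subseteq> B_{d-1}(X;R) is an isomorphism *)
definition spanning_forest :: "('d::finite \<Rightarrow> 'e \<Rightarrow> int) \<Rightarrow> 'd set \<Rightarrow> bool" where
  "spanning_forest bd V \<longleftrightarrow>
     inj_on (rbdry bd) {c. supported_on c V} \<and>
     rbdry bd ` {c. supported_on c V} = rbdry bd ` UNIV"

definition cell_chain :: "'d \<Rightarrow> ('d \<Rightarrow> real)" where
  "cell_chain e = (\<lambda>s. if s = e then 1 else 0)"

definition Dchain :: "('d::finite \<Rightarrow> 'e \<Rightarrow> int) \<Rightarrow> 'd set \<Rightarrow> 'd \<Rightarrow> ('d \<Rightarrow> real)" where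
  "Dchain bd V0 e = (THE D. supported_on D V0 \<and> rbdry bd D = rbdry bd (cell_chain e))"

definition zcycle :: "('d::finite \<Rightarrow> 'e \<Rightarrow> int) \<Rightarrow> 'd set \<Rightarrow> 'd \<Rightarrow> ('d \<Rightarrow> real)" where
  "zcycle bd V0 e = (\<lambda>s. cell_chain e s - Dchain bd V0 e s)"

(* Mesh(X;{z(e_a)},geometric) for the enumeration e_0..e_{N-1} (0-based) *)
definition Mesh_geom :: "('d::finite \<Rightarrow> 'e \<Rightarrow> int) \<Rightarrow> 'd set \<Rightarrow> nat \<Rightarrow> (nat \<Rightarrow> 'd) \<Rightarrow> real mat" where
  "Mesh_geom bd V0 N en =
     mat N N (\<lambda>(a,b). cinner (zcycle bd V0 (en a)) (zcycle bd V0 (en b)))"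

definition Mesh_sharp_geom :: "('d::finite \<Rightarrow> 'e \<Rightarrow> int) \<Rightarrow> 'd set \<Rightarrow> nat \<Rightarrow> (nat \<Rightarrow> 'd) \<Rightarrow> real mat" where
  "Mesh_sharp_geom bd V0 N en =
     mat N N (\<lambda>(a,b). cinner (Dchain bd V0 (en a)) (Dchain bd V0 (en b)))"

(* integral cellular (d-1)-cycles of X_V (X_V has the same (d-1)-skeleton as X) *)
definition cycles_dm1 :: "('e::finite \<Rightarrow> 'f \<Rightarrow> int) \<Rightarrow> ('e \<Rightarrow> int) set" where
  "cycles_dm1 bd' = {z. ibdry bd' z = (\<lambda>_. 0)}"

definition bounds_dm1 :: "('d::finite \<Rightarrow> 'e \<Rightarrow> int) \<Rightarrow> 'd set \<Rightarrow> ('e \<Rightarrow> int) set" where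
  "bounds_dm1 bd V = {ibdry bd c | c. supported_on c V}"

(* t_{d-1}(X_V): order of the torsion subgroup of H_{d-1}(X_V;Z) = Z_{d-1} / B_{d-1}(X_V),
   computed as the number of classes of torsion cycles modulo boundaries *)
definition torsion_order :: "('d::finite \<Rightarrow> 'e::finite \<Rightarrow> int) \<Rightarrow> ('e \<Rightarrow> 'f \<Rightarrow> int) \<Rightarrow> 'd set \<Rightarrow> nat" where
  "torsion_order bd bd' V =
     card ({z \<in> cycles_dm1 bd'. \<exists>k::int. k > 0 \<and> (\<lambda>t. k * z t) \<in> bounds_dm1 bd V}
           // {(x, y). (\<lambda>t. x t - y t) \<in> bounds_dm1 bd V})"

end

theory Submission
  imports Defs
begin

text \<open>Let \<open>w\<close> enumerate \<open>V0\<close> and let \<open>A\<close> be the \<open>r \<times> N\<close> matrix of coordinates of the chains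
  \<open>D(e\<^sub>a)\<close> in the cell basis of \<open>C\<^sub>d(X\<^sub>V\<^sub>0)\<close>. Then \<open>Mesh\<^sup># = A\<^sup>T A\<close> and \<open>Mesh = Id + Mesh\<^sup>#\<close>. By Sylvester's
  identity, \<open>U\<^sup>r det(U - A\<^sup>T A) = U\<^sup>N det(U - A A\<^sup>T)\<close>, and \<open>U - A A\<^sup>T = P \<Delta> P\<^sup>T\<close>, where column \<open>s\<close> of
  \<open>P\<close> holds the coordinates of \<open>D(s)\<close> for every \<open>d\<close>-cell \<open>s\<close> and \<open>\<Delta>\<close> is diagonal with entry \<open>U\<close>
  on \<open>V0\<close> and \<open>-1\<close> elsewhere. Cauchy-Binet expands \<open>det(P \<Delta> P\<^sup>T)\<close> over the \<open>r\<close>-sets \<open>V\<close> of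
  cells, with coefficient \<open>det(P\<^sub>V)\<^sup>2 U\<^bsup>|V \<inter> V0|\<^esup> (-1)\<^bsup>|V - V0|\<^esup>\<close>. Now \<open>det P\<^sub>V \<noteq> 0\<close> exactly when
  \<open>V\<close> is a spanning forest, and then \<open>|det P\<^sub>V| = t(X\<^sub>V) / t(X\<^sub>V\<^sub>0)\<close>: exchanging a cell \<open>e\<close> of \<open>V\<close>
  outside \<open>V0\<close> for a suitable cell \<open>k\<close> of \<open>V0\<close> multiplies both the determinant and the torsion by
  \<open>|c(k)|\<close>, where \<open>c\<close> is the chain on the new forest with boundary \<open>\<partial>e\<close>. The torsion factor comes
  from comparing the orders of \<open>\<partial>e\<close> and \<open>\<partial>k\<close> modulo the boundaries of the common part.\<close>

section \<open>Determinants\<close>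

lemma mat_cong:
  assumes "\<And>i j. i < n \<Longrightarrow> j < m \<Longrightarrow> f (i, j) = g (i, j)"
  shows "mat n m f = mat n m g"
  by (rule eq_matI) (use assms in auto)

lemma det_mat_transpose_fun:
  fixes h :: "nat \<Rightarrow> nat \<Rightarrow> 'a::comm_ring_1"
  shows "det (mat n n (\<lambda>(i,k). h k i)) = det (mat n n (\<lambda>(i,k). h i k))"
proof -
  have "mat n n (\<lambda>(i,k). h k i) = transpose_mat (mat n n (\<lambda>(i,k). h i k))"
    by (rule eq_matI) auto
  then show ?thesis using det_transpose[of "mat n n (\<lambda>(i,k). h i k)" n] by simp
qed

lemma det_mat_leibniz:
  fixes h :: "nat \<Rightarrow> nat \<Rightarrow> 'a::comm_ring_1"
  shows "det (mat n n (\<lambda>(i,k). h i k)) =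
    (\<Sum>p\<in>{p. p permutes {0..<n}}. signof p * (\<Prod>i=0..<n. h i (p i)))"
proof -
  have "det (mat n n (\<lambda>(i,k). h i k)) =
      (\<Sum>p\<in>{p. p permutes {0..<n}}. signof p * (\<Prod>i=0..<n. mat n n (\<lambda>(i,k). h i k) $$ (i, p i)))"
    by (rule det_def') simp
  also have "\<dots> = (\<Sum>p\<in>{p. p permutes {0..<n}}. signof p * (\<Prod>i=0..<n. h i (p i)))"
  proof (rule sum.cong[OF refl])
    fix p assume "p \<in> {p. p permutes {0..<n}}"
    then have "\<And>i. i < n \<Longrightarrow> p i < n" using permutes_in_image by fastforce
    then show "signof p * (\<Prod>i=0..<n. mat n n (\<lambda>(i,k). h i k) $$ (i, p i)) =
        signof p * (\<Prod>i=0..<n. h i (p i))"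
      by (auto intro!: prod.cong)
  qed
  finally show ?thesis .
qed

lemma det_mat_rows_not_inj:
  fixes h :: "'x \<Rightarrow> nat \<Rightarrow> 'a::comm_ring_1"
  assumes "\<not> inj_on f {0..<n}"
  shows "det (mat n n (\<lambda>(i,k). h (f i) k)) = 0"
proof -
  obtain i j where ij: "i \<in> {0..<n}" "j \<in> {0..<n}" "i \<noteq> j" "f i = f j"
    using assms unfolding inj_on_def by auto
  show ?thesis
    by (rule det_identical_rows[of _ n i j]) (use ij in auto)
qed

lemma det_mat_cols_not_inj:
  fixes h :: "nat \<Rightarrow> 'x \<Rightarrow> 'a::comm_ring_1"
  assumes "\<not> inj_on f {0..<n}"
  shows "det (mat n n (\<lambda>(i,k). h i (f k))) = 0"
  using det_mat_rows_not_inj[OF assms, of "\<lambda>c i. h i c"]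
    det_mat_transpose_fun[of n "\<lambda>i k. h k (f i)"] by simp

lemma det_mat_rows_permute:
  fixes h :: "'x \<Rightarrow> nat \<Rightarrow> 'a::comm_ring_1"
  assumes p: "p permutes {0..<n}"
  shows "det (mat n n (\<lambda>(i,k). h (e (p i)) k)) = signof p * det (mat n n (\<lambda>(i,k). h (e i) k))"
proof -
  have "\<And>i. i < n \<Longrightarrow> p i < n" using permutes_in_image[OF p] by auto
  then have "mat n n (\<lambda>(i,k). h (e (p i)) k) =
      mat n n (\<lambda>(i,j). mat n n (\<lambda>(i,k). h (e i) k) $$ (p i, j))"
    by (intro eq_matI) auto
  then show ?thesis
    using det_permute_rows[OF _ p, of "mat n n (\<lambda>(i,k). h (e i) k)"] by simp
qed

lemma det_mat_cols_permute:
  fixes h :: "nat \<Rightarrow> 'x \<Rightarrow> 'a::comm_ring_1"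
  assumes p: "p permutes {0..<n}"
  shows "det (mat n n (\<lambda>(i,k). h i (e (p k)))) = signof p * det (mat n n (\<lambda>(i,k). h i (e k)))"
  using det_mat_rows_permute[OF p, of "\<lambda>c i. h i c" e]
    det_mat_transpose_fun[of n "\<lambda>i k. h k (e (p i))"] det_mat_transpose_fun[of n "\<lambda>i k. h k (e i)"]
  by simp

lemma permutes_inv_into_comp:
  fixes n :: nat
  assumes g: "bij_betw g {0..<n} V" and f: "bij_betw f {0..<n} V"
  shows "(\<lambda>i. if i < n then inv_into {0..<n} g (f i) else i) permutes {0..<n}"
proof -
  have "bij_betw (inv_into {0..<n} g \<circ> f) {0..<n} {0..<n}"
    by (rule bij_betw_trans[OF f bij_betw_inv_into[OF g]])
  then have "bij_betw (\<lambda>i. if i < n then inv_into {0..<n} g (f i) else i) {0..<n} {0..<n}"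
    by (rule bij_betw_cong[THEN iffD1, rotated]) auto
  then show ?thesis by (rule bij_imp_permutes) auto
qed

lemma abs_det_mat_cols_reindex:
  fixes h :: "nat \<Rightarrow> 'x \<Rightarrow> 'a::linordered_idom"
  assumes f: "bij_betw f {0..<n} V" and g: "bij_betw g {0..<n} V"
  shows "\<bar>det (mat n n (\<lambda>(i,k). h i (g k)))\<bar> = \<bar>det (mat n n (\<lambda>(i,k). h i (f k)))\<bar>"
proof -
  let ?q = "\<lambda>k. if k < n then inv_into {0..<n} f (g k) else k"
  have "g k = f (?q k)" if "k < n" for k
    using that f g by (simp add: bij_betw_inv_into_right bij_betwE)
  then have "mat n n (\<lambda>(i,k). h i (g k)) = mat n n (\<lambda>(i,k). h i (f (?q k)))"
    by (intro mat_cong) simp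
  then show ?thesis
    using det_mat_cols_permute[OF permutes_inv_into_comp[OF f g], of h f] by (simp add: sign_def abs_mult)
qed

lemma det_mat_col_lincomb:
  fixes h :: "'x \<Rightarrow> nat \<Rightarrow> 'a::comm_ring_1" and M :: "nat \<Rightarrow> nat \<Rightarrow> 'a"
  assumes p: "p < n" and X: "finite X"
  shows "det (mat n n (\<lambda>(i,j). if j = p then (\<Sum>x\<in>X. a x * h x i) else M i j)) =
    (\<Sum>x\<in>X. a x * det (mat n n (\<lambda>(i,j). if j = p then h x i else M i j)))"
proof -
  let ?P = "{q. q permutes {0..<n}}"
  let ?rest = "\<lambda>q. \<Prod>i\<in>{0..<n} - {Hilbert_Choice.inv q p}. M i (q i)"
  have split: "(\<Prod>i=0..<n. if q i = p then S i else M i (q i)) = S (Hilbert_Choice.inv q p) * ?rest q"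
    if q: "q permutes {0..<n}" for q and S :: "nat \<Rightarrow> 'a"
  proof -
    have i0: "Hilbert_Choice.inv q p \<in> {0..<n}" using p permutes_inv[OF q] permutes_in_image by fastforce
    have "(\<Prod>i\<in>{0..<n} - {Hilbert_Choice.inv q p}. if q i = p then S i else M i (q i)) = ?rest q"
      using permutes_inverses(2)[OF q] by (intro prod.cong) (auto simp: eq_commute[of "q _" p])
    then show ?thesis
      using prod.remove[OF _ i0, of "\<lambda>i. if q i = p then S i else M i (q i)"]
        permutes_inverses(1)[OF q] by simp
  qed
  have "det (mat n n (\<lambda>(i,j). if j = p then (\<Sum>x\<in>X. a x * h x i) else M i j)) =
      (\<Sum>q\<in>?P. signof q * ((\<Sum>x\<in>X. a x * h x (Hilbert_Choice.inv q p)) * ?rest q))"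
    unfolding det_mat_leibniz by (intro sum.cong) (simp_all add: split)
  also have "\<dots> = (\<Sum>x\<in>X. a x * (\<Sum>q\<in>?P. signof q * (h x (Hilbert_Choice.inv q p) * ?rest q)))"
    by (simp add: sum_distrib_left sum_distrib_right sum.swap[of _ ?P] ac_simps)
  also have "\<dots> = (\<Sum>x\<in>X. a x * det (mat n n (\<lambda>(i,j). if j = p then h x i else M i j)))"
    unfolding det_mat_leibniz by (intro sum.cong) (simp_all add: split)
  finally show ?thesis .
qed

text \<open>An arbitrary enumeration; it is only used through absolute values of determinants, which
  do not depend on the choice.\<close>

definition enum_set :: "nat \<Rightarrow> 'a set \<Rightarrow> nat \<Rightarrow> 'a" where
  "enum_set n V = (SOME f. bij_betw f {0..<n} V)"

lemma enum_set_bij: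
  assumes "finite V" "card V = n"
  shows "bij_betw (enum_set n V) {0..<n} V"
proof -
  have "\<exists>f. bij_betw f {0..<n} V"
    using finite_same_card_bij[of "{0..<n}" V] assms by auto
  then show ?thesis unfolding enum_set_def by (rule someI_ex)
qed

lemma det_mat_prod_expand:
  fixes a :: "nat \<Rightarrow> 'x \<Rightarrow> 'a::comm_ring_1" and b :: "'x \<Rightarrow> nat \<Rightarrow> 'a"
  assumes "finite S"
  shows "det (mat n n (\<lambda>(i,k). \<Sum>c\<in>S. a i c * b c k)) =
    (\<Sum>f\<in>{0..<n} \<rightarrow>\<^sub>E S. (\<Prod>i=0..<n. a i (f i)) * det (mat n n (\<lambda>(i,k). b (f i) k)))"
proof -
  let ?P = "{p. p permutes {0..<n}}" and ?F = "{0..<n} \<rightarrow>\<^sub>E S"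
  have "det (mat n n (\<lambda>(i,k). \<Sum>c\<in>S. a i c * b c k)) =
      (\<Sum>p\<in>?P. signof p * (\<Sum>f\<in>?F. (\<Prod>i=0..<n. a i (f i)) * (\<Prod>i=0..<n. b (f i) (p i))))"
    unfolding det_mat_leibniz using assms by (simp add: prod_sum_PiE prod.distrib)
  also have "\<dots> = (\<Sum>f\<in>?F. (\<Prod>i=0..<n. a i (f i)) * (\<Sum>p\<in>?P. signof p * (\<Prod>i=0..<n. b (f i) (p i))))"
    by (simp add: sum_distrib_left sum.swap[of _ ?P] ac_simps)
  finally show ?thesis unfolding det_mat_leibniz .
qed

lemma bij_betw_restrict_comp_permutes:
  assumes e: "bij_betw e {0..<n} V" and p: "p permutes {0..<n}"
  shows "bij_betw (restrict (e \<circ> p) {0..<n}) {0..<n} V"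
proof -
  have "bij_betw (e \<circ> p) {0..<n} V" by (rule bij_betw_trans[OF permutes_imp_bij[OF p] e])
  then show ?thesis by (rule bij_betw_cong[THEN iffD1, rotated]) simp
qed

lemma bij_betw_subsets_perms_inj_funs:
  fixes S :: "'a set"
  assumes "finite S"
  shows "bij_betw (\<lambda>(V, p). restrict (enum_set n V \<circ> p) {0..<n})
    ({V. V \<subseteq> S \<and> card V = n} \<times> {p. p permutes {0..<n}}) {f \<in> {0..<n} \<rightarrow>\<^sub>E S. inj_on f {0..<n}}"
    (is "bij_betw ?\<Phi> ?A ?B")
proof -
  define \<Psi> where "\<Psi> f = (f ` {0..<n}, \<lambda>i. if i < n then inv_into {0..<n} (enum_set n (f ` {0..<n})) (f i) else i)"
    for f :: "nat \<Rightarrow> 'a"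
  have e: "bij_betw (enum_set n V) {0..<n} V" if "V \<subseteq> S" "card V = n" for V
    using that assms by (intro enum_set_bij) (auto intro: finite_subset)
  have \<Phi>: "bij_betw (?\<Phi> (V, p)) {0..<n} V" if "V \<subseteq> S" "card V = n" "p permutes {0..<n}" for V p
    using bij_betw_restrict_comp_permutes[OF e that(3)] that(1,2) by simp
  show ?thesis
  proof (rule bij_betwI[where g = \<Psi>])
    show "?\<Phi> \<in> ?A \<rightarrow> ?B"
    proof
      fix x assume "x \<in> ?A"
      then obtain V p where x: "x = (V, p)" and V: "V \<subseteq> S" "card V = n" and p: "p permutes {0..<n}"
        by auto
      show "?\<Phi> x \<in> ?B" using \<Phi>[OF V p] V(1) by (auto simp: x bij_betw_def)
    qed
    show "\<Psi> \<in> ?B \<rightarrow> ?A"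
    proof
      fix f assume "f \<in> ?B"
      then have f: "f ` {0..<n} \<subseteq> S" "bij_betw f {0..<n} (f ` {0..<n})"
        by (auto simp: bij_betw_def)
      then have "card (f ` {0..<n}) = n" by (simp add: bij_betw_same_card[symmetric])
      then show "\<Psi> f \<in> ?A"
        using f permutes_inv_into_comp[OF e f(2)] by (simp add: \<Psi>_def)
    qed
    show "\<Psi> (?\<Phi> x) = x" if "x \<in> ?A" for x
    proof -
      obtain V p where x: "x = (V, p)" and V: "V \<subseteq> S" "card V = n" and p: "p permutes {0..<n}"
        using \<open>x \<in> ?A\<close> by auto
      have "\<And>i. i < n \<Longrightarrow> p i < n" "\<And>i. \<not> i < n \<Longrightarrow> p i = i"
        using permutes_in_image[OF p] permutes_not_in[OF p] by auto
      then show ?thesis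
        using \<Phi>[OF V p] e[OF V] by (auto simp: x \<Psi>_def bij_betw_def bij_betw_inv_into_left)
    qed
    show "?\<Phi> (\<Psi> f) = f" if "f \<in> ?B" for f
    proof -
      have "bij_betw (enum_set n (f ` {0..<n})) {0..<n} (f ` {0..<n})"
        using that by (intro e) (auto simp: card_image)
      then show ?thesis
        using that by (auto simp: \<Psi>_def restrict_def bij_betw_inv_into_right PiE_def extensional_def)
    qed
  qed
qed

lemma cauchy_binet:
  fixes a :: "nat \<Rightarrow> 'x \<Rightarrow> 'a::comm_ring_1" and b :: "'x \<Rightarrow> nat \<Rightarrow> 'a"
  assumes S: "finite S"
  shows "det (mat n n (\<lambda>(i,k). \<Sum>c\<in>S. a i c * b c k)) =
    (\<Sum>V\<in>{V. V \<subseteq> S \<and> card V = n}. det (mat n n (\<lambda>(i,p). a i (enum_set n V p)))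
      * det (mat n n (\<lambda>(p,k). b (enum_set n V p) k)))"
proof -
  let ?F = "{0..<n} \<rightarrow>\<^sub>E S" and ?P = "{p. p permutes {0..<n}}"
  let ?t = "\<lambda>f. (\<Prod>i=0..<n. a i (f i)) * det (mat n n (\<lambda>(i,k). b (f i) k))"
  let ?B = "\<lambda>V. det (mat n n (\<lambda>(p,k). b (enum_set n V p) k))"
  have "det (mat n n (\<lambda>(i,k). \<Sum>c\<in>S. a i c * b c k)) = sum ?t ?F"
    by (rule det_mat_prod_expand[OF S])
  also have "\<dots> = sum ?t {f \<in> ?F. inj_on f {0..<n}}"
    by (rule sum.mono_neutral_right) (auto simp: det_mat_rows_not_inj finite_PiE S)
  also have "\<dots> = (\<Sum>(V, p)\<in>{V. V \<subseteq> S \<and> card V = n} \<times> ?P. ?t (restrict (enum_set n V \<circ> p) {0..<n}))"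
    using sum.reindex_bij_betw[OF bij_betw_subsets_perms_inj_funs[OF S], of ?t]
    by (simp only: case_prod_unfold)
  also have "\<dots> = (\<Sum>V\<in>{V. V \<subseteq> S \<and> card V = n}. \<Sum>p\<in>?P. ?t (restrict (enum_set n V \<circ> p) {0..<n}))"
    by (rule sum.cartesian_product[symmetric])
  also have "\<dots> = (\<Sum>V\<in>{V. V \<subseteq> S \<and> card V = n}. det (mat n n (\<lambda>(i,p). a i (enum_set n V p))) * ?B V)"
  proof (rule sum.cong[OF refl])
    fix V
    have "?t (restrict (enum_set n V \<circ> p) {0..<n}) = signof p * (\<Prod>i=0..<n. a i (enum_set n V (p i))) * ?B V"
      if p: "p \<in> ?P" for p
    proof -
      have "mat n n (\<lambda>(i,k). b (restrict (enum_set n V \<circ> p) {0..<n} i) k) =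
          mat n n (\<lambda>(i,k). b (enum_set n V (p i)) k)"
        by (rule mat_cong) simp
      moreover have "(\<Prod>i=0..<n. a i (restrict (enum_set n V \<circ> p) {0..<n} i)) =
          (\<Prod>i=0..<n. a i (enum_set n V (p i)))"
        by (rule prod.cong) simp_all
      ultimately show ?thesis
        using p det_mat_rows_permute[of p n "\<lambda>c k. b c k" "enum_set n V"] by simp
    qed
    then show "(\<Sum>p\<in>?P. ?t (restrict (enum_set n V \<circ> p) {0..<n})) =
        det (mat n n (\<lambda>(i,p). a i (enum_set n V p))) * ?B V"
      unfolding det_mat_leibniz by (simp add: sum_distrib_right)
  qed
  finally show ?thesis .
qed

lemma cauchy_binet_gram:
  fixes P :: "nat \<Rightarrow> 'x \<Rightarrow> 'a::comm_ring_1" and d :: "'x \<Rightarrow> 'a"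
  assumes S: "finite S"
  shows "det (mat n n (\<lambda>(i,k). \<Sum>c\<in>S. P i c * d c * P k c)) =
    (\<Sum>V\<in>{V. V \<subseteq> S \<and> card V = n}. (det (mat n n (\<lambda>(i,p). P i (enum_set n V p))))\<^sup>2 * (\<Prod>c\<in>V. d c))"
proof -
  have "det (mat n n (\<lambda>(i,p). P i (enum_set n V p) * d (enum_set n V p))) =
      (\<Prod>c\<in>V. d c) * det (mat n n (\<lambda>(i,p). P i (enum_set n V p)))"
    if V: "V \<subseteq> S" "card V = n" for V
  proof -
    have e: "bij_betw (enum_set n V) {0..<n} V"
      using V S by (intro enum_set_bij) (auto intro: finite_subset)
    have "(\<Prod>i=0..<n. d (enum_set n V (p i))) = (\<Prod>c\<in>V. d c)" if "p permutes {0..<n}" for p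
      using prod.permute[OF that, of "\<lambda>i. d (enum_set n V i)"] prod.reindex_bij_betw[OF e, of d]
      by (simp add: comp_def)
    then show ?thesis unfolding det_mat_leibniz
      by (simp add: prod.distrib sum_distrib_left ac_simps)
  qed
  moreover have "det (mat n n (\<lambda>(i,k). \<Sum>c\<in>S. P i c * d c * P k c)) =
      (\<Sum>V\<in>{V. V \<subseteq> S \<and> card V = n}. det (mat n n (\<lambda>(i,p). P i (enum_set n V p) * d (enum_set n V p)))
        * det (mat n n (\<lambda>(p,k). P k (enum_set n V p))))"
    by (rule cauchy_binet[OF S])
  moreover have "det (mat n n (\<lambda>(p,k). P k (enum_set n V p))) = det (mat n n (\<lambda>(i,p). P i (enum_set n V p)))"
    for V
    by (rule det_mat_transpose_fun)
  ultimately show ?thesis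
    by (auto simp: power2_eq_square intro!: sum.cong)
qed

lemma det_sylvester:
  fixes A :: "'a::idom mat"
  assumes A: "A \<in> carrier_mat r N"
  shows "U ^ N * det (U \<cdot>\<^sub>m 1\<^sub>m r - A * A\<^sup>T) = U ^ r * det (U \<cdot>\<^sub>m 1\<^sub>m N - A\<^sup>T * A)"
proof -
  have At: "A\<^sup>T \<in> carrier_mat N r" using A by simp
  define X where "X = four_block_mat (U \<cdot>\<^sub>m 1\<^sub>m r) A (A\<^sup>T) (1\<^sub>m N)"
  define L1 where "L1 = four_block_mat (1\<^sub>m r) (- A) (0\<^sub>m N r) (1\<^sub>m N)"
  define L2 where "L2 = four_block_mat (1\<^sub>m r) (0\<^sub>m r N) (- A\<^sup>T) (U \<cdot>\<^sub>m 1\<^sub>m N)"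
  have X: "X \<in> carrier_mat (r+N) (r+N)" unfolding X_def using A At by auto
  have "L1 * X = four_block_mat (U \<cdot>\<^sub>m 1\<^sub>m r - A * A\<^sup>T) (0\<^sub>m r N) (A\<^sup>T) (1\<^sub>m N)"
    unfolding L1_def X_def by (subst mult_four_block_mat[of _ r r _ N _ N _ _ r _ N]) (use A At in auto)
  then have "det (L1 * X) = det (U \<cdot>\<^sub>m 1\<^sub>m r - A * A\<^sup>T)"
    by (simp, subst det_four_block_mat_upper_right_zero[of _ r _ N]) (use A At in auto)
  moreover have "det (L1 * X) = det L1 * det X"
    by (rule det_mult[OF _ X]) (use A in \<open>auto simp: L1_def\<close>)
  moreover have "det L1 = 1" unfolding L1_def
    by (subst det_four_block_mat_lower_left_zero[of _ r _ N]) (use A in auto)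
  moreover have "L2 * X = four_block_mat (U \<cdot>\<^sub>m 1\<^sub>m r) A (0\<^sub>m N r) (U \<cdot>\<^sub>m 1\<^sub>m N - A\<^sup>T * A)"
    unfolding L2_def X_def by (subst mult_four_block_mat[of _ r r _ N _ N _ _ r _ N]) (use A At in auto)
  then have "det (L2 * X) = U ^ r * det (U \<cdot>\<^sub>m 1\<^sub>m N - A\<^sup>T * A)"
    by (simp, subst det_four_block_mat_lower_left_zero[of _ r _ N]) (use A At in auto)
  moreover have "det (L2 * X) = det L2 * det X"
    by (rule det_mult[OF _ X]) (use At in \<open>auto simp: L2_def\<close>)
  moreover have "det L2 = U ^ N" unfolding L2_def
    by (subst det_four_block_mat_upper_right_zero[of _ r _ N]) (use At in auto)
  ultimately show ?thesis by simp
qed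

lemma det_nonzero_imp_solvable:
  fixes A :: "'a::field mat"
  assumes A: "A \<in> carrier_mat n n" and d: "det A \<noteq> 0" and b: "b \<in> carrier_vec n"
  obtains v where "v \<in> carrier_vec n" "A *\<^sub>v v = b"
proof
  let ?v = "(1 / det A) \<cdot>\<^sub>v (adj_mat A *\<^sub>v b)"
  have adj: "adj_mat A \<in> carrier_mat n n" using adj_mat(1)[OF A] .
  then show "?v \<in> carrier_vec n" using b by simp
  have "A *\<^sub>v ?v = (1 / det A) \<cdot>\<^sub>v ((A * adj_mat A) *\<^sub>v b)"
    using A adj b by (simp add: mult_mat_vec)
  also have "\<dots> = b"
    using d b by (intro eq_vecI) (auto simp: adj_mat(2)[OF A])
  finally show "A *\<^sub>v ?v = b" .
qed

lemma isCont_det_char: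
  fixes M :: "real mat"
  assumes M: "M \<in> carrier_mat n n"
  shows "isCont (\<lambda>U. det (U \<cdot>\<^sub>m 1\<^sub>m n - M)) x"
proof -
  have poly: "(\<lambda>U. det (U \<cdot>\<^sub>m 1\<^sub>m n - M)) = (\<lambda>U. \<Sum>p\<in>{p. p permutes {0..<n}}. signof p *
      (\<Prod>i=0..<n. U * (if i = p i then 1 else 0) - M $$ (i, p i)))"
  proof
    fix U
    have "U \<cdot>\<^sub>m 1\<^sub>m n - M = mat n n (\<lambda>(i,k). U * (if i = k then 1 else 0) - M $$ (i, k))"
      using M by (intro eq_matI) auto
    then show "det (U \<cdot>\<^sub>m 1\<^sub>m n - M) = (\<Sum>p\<in>{p. p permutes {0..<n}}. signof p *
        (\<Prod>i=0..<n. U * (if i = p i then 1 else 0) - M $$ (i, p i)))"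
      by (simp add: det_mat_leibniz)
  qed
  show ?thesis unfolding poly by (intro continuous_intros)
qed

section \<open>Chains and spanning forests\<close>

definition int_cell_chain :: "'d \<Rightarrow> 'd \<Rightarrow> int" where
  "int_cell_chain e = (\<lambda>s. if s = e then 1 else 0)"

lemma sum_cell_chain_left: "(\<Sum>s\<in>UNIV. cell_chain e s * f s) = f (e::'d::finite)"
proof -
  have "(\<Sum>s\<in>UNIV. cell_chain e s * f s) = (\<Sum>s\<in>UNIV. if s = e then f e else 0)"
    by (rule sum.cong) (auto simp: cell_chain_def)
  then show ?thesis by simp
qed

lemma sum_cell_chain_right: "(\<Sum>s\<in>UNIV. f s * cell_chain e s) = f (e::'d::finite)"
  using sum_cell_chain_left[of e f] by (simp add: mult.commute)

lemma supported_onD: "supported_on c V \<Longrightarrow> s \<notin> V \<Longrightarrow> c s = 0"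
  unfolding supported_on_def by auto

lemma supported_on_cell_chain: "e \<in> V \<Longrightarrow> supported_on (cell_chain e) V"
  unfolding supported_on_def cell_chain_def by auto

lemma rbdry_sum:
  "rbdry bd (\<lambda>s. \<Sum>i\<in>I. a i * x i s) = (\<lambda>t. \<Sum>i\<in>I. a i * rbdry bd (x i) t)"
  unfolding rbdry_def
  by (rule ext) (simp add: sum_distrib_left sum_distrib_right mult.assoc sum.swap[where A=I])

lemma rbdry_lincomb:
  "rbdry bd (\<lambda>s. a * x s + b * y s) = (\<lambda>t. a * rbdry bd x t + b * rbdry bd y t)"
  unfolding rbdry_def
  by (rule ext) (simp add: sum_distrib_left distrib_right sum.distrib mult.assoc)

lemma rbdry_diff: "rbdry bd (\<lambda>s. x s - y s) = (\<lambda>t. rbdry bd x t - rbdry bd y t)"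
  unfolding rbdry_def by (rule ext) (simp add: left_diff_distrib sum_subtractf)

lemma rbdry_scale: "rbdry bd (\<lambda>s. a * x s) = (\<lambda>t. a * rbdry bd x t)"
  unfolding rbdry_def by (rule ext) (simp add: sum_distrib_left mult.assoc)

lemma rbdry_zero: "rbdry bd (\<lambda>s. 0) = (\<lambda>t. 0)"
  unfolding rbdry_def by simp

lemma rbdry_cell_chain: "rbdry bd (cell_chain e) = (\<lambda>t. real_of_int (bd e t))"
  unfolding rbdry_def sum_cell_chain_left ..

lemma rbdry_of_int: "rbdry bd (\<lambda>s. real_of_int (c s)) = (\<lambda>t. real_of_int (ibdry bd c t))"
  unfolding rbdry_def ibdry_def by (rule ext) simp

lemma ibdry_int_cell_chain: "ibdry bd (int_cell_chain e) = bd e"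
proof
  fix t
  have "(\<Sum>s\<in>UNIV. int_cell_chain e s * bd s t) = (\<Sum>s\<in>UNIV. if s = e then bd e t else 0)"
    by (rule sum.cong) (auto simp: int_cell_chain_def)
  then show "ibdry bd (int_cell_chain e) t = bd e t" unfolding ibdry_def by simp
qed

lemma ibdry_lincomb:
  "ibdry bd (\<lambda>s. a * x s + b * y s) = (\<lambda>t. a * ibdry bd x t + b * ibdry bd y t)"
  unfolding ibdry_def
  by (rule ext) (simp add: sum_distrib_left distrib_right sum.distrib mult.assoc)

lemma ibdry_scale: "ibdry bd (\<lambda>s. a * x s) = (\<lambda>t. a * ibdry bd x t)"
  unfolding ibdry_def by (rule ext) (simp add: sum_distrib_left mult.assoc)

lemma ibdry_diff: "ibdry bd (\<lambda>s. x s - y s) = (\<lambda>t. ibdry bd x t - ibdry bd y t)"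
  unfolding ibdry_def by (rule ext) (simp add: left_diff_distrib sum_subtractf)

lemma spanning_forest_unique:
  assumes "spanning_forest bd V" "supported_on c1 V" "supported_on c2 V"
    "rbdry bd c1 = rbdry bd c2"
  shows "c1 = c2"
  using assms unfolding spanning_forest_def inj_on_def by auto

lemma spanning_forest_obtain:
  assumes "spanning_forest bd V"
  obtains c where "supported_on c V" "rbdry bd c = rbdry bd x"
proof -
  have "rbdry bd x \<in> rbdry bd ` {c. supported_on c V}"
    using assms unfolding spanning_forest_def by auto
  then show ?thesis using that by auto
qed

lemma Dchain_supported_rbdry:
  assumes "spanning_forest bd V0"
  shows "supported_on (Dchain bd V0 e) V0 \<and> rbdry bd (Dchain bd V0 e) = rbdry bd (cell_chain e)"
proof -
  obtain c where c: "supported_on c V0" "rbdry bd c = rbdry bd (cell_chain e)"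
    using spanning_forest_obtain[OF assms] .
  show ?thesis unfolding Dchain_def
    by (rule theI[where a=c]) (use c spanning_forest_unique[OF assms] in auto)
qed

lemma Dchain_eqI:
  assumes "spanning_forest bd V0" "supported_on c V0" "rbdry bd c = rbdry bd (cell_chain e)"
  shows "Dchain bd V0 e = c"
  using Dchain_supported_rbdry[OF assms(1)] spanning_forest_unique[OF assms(1)] assms(2,3) by metis

lemma Dchain_cell_chain:
  assumes "spanning_forest bd V0" "v \<in> V0"
  shows "Dchain bd V0 v = cell_chain v"
  by (rule Dchain_eqI[OF assms(1) supported_on_cell_chain[OF assms(2)] refl])

lemma chain_expand_cells:
  fixes m :: nat
  assumes g: "bij_betw g {0..<m} V" and c: "supported_on c V"
  shows "(\<lambda>s. \<Sum>p=0..<m. c (g p) * cell_chain (g p) s) = c"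
proof
  fix s show "(\<Sum>p=0..<m. c (g p) * cell_chain (g p) s) = c s"
  proof (cases "s \<in> V")
    case True
    then obtain p0 where p0: "p0 < m" "s = g p0" using g unfolding bij_betw_def by auto
    have "(\<Sum>p=0..<m. c (g p) * cell_chain (g p) s) = (\<Sum>p=0..<m. if p = p0 then c s else 0)"
    proof (rule sum.cong[OF refl])
      fix p assume "p \<in> {0..<m}"
      then have "g p = g p0 \<longleftrightarrow> p = p0"
        using g p0(1) by (intro inj_on_eq_iff[of g "{0..<m}"]) (auto simp: bij_betw_def)
      then show "c (g p) * cell_chain (g p) s = (if p = p0 then c s else 0)"
        using p0 by (auto simp: cell_chain_def)
    qed
    then show ?thesis using p0 by simp
  next
    case False
    then show ?thesis
      using g supported_onD[OF c False] unfolding cell_chain_def bij_betw_def by (auto intro!: sum.neutral)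
  qed
qed

lemma sum_cell_chain_apply:
  fixes m :: nat
  assumes "inj_on f {0..<m}" "p < m"
  shows "(\<Sum>q=0..<m. a q * cell_chain (f q) (f p)) = a p"
proof -
  have "(\<Sum>q=0..<m. a q * cell_chain (f q) (f p)) = (\<Sum>q=0..<m. if q = p then a q else 0)"
    by (rule sum.cong[OF refl]) (use assms in \<open>auto simp: inj_on_def cell_chain_def\<close>)
  then show ?thesis using assms by simp
qed

lemma supported_on_sum_cell_chain:
  "f ` {0..<m} \<subseteq> V \<Longrightarrow> supported_on (\<lambda>s. \<Sum>p=0..<m. a p * cell_chain (f p) s) V"
  unfolding supported_on_def cell_chain_def by (auto intro!: sum.neutral)

lemma eq_of_mutually_inverse_matrices:
  fixes X :: "nat \<Rightarrow> nat \<Rightarrow> real" and Y :: "nat \<Rightarrow> nat \<Rightarrow> real"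
  assumes XY: "\<And>i i'. i < r \<Longrightarrow> i' < r \<Longrightarrow> (\<Sum>p=0..<m. X i p * Y p i') = (if i = i' then 1 else 0)"
    and YX: "\<And>p p'. p < m \<Longrightarrow> p' < m \<Longrightarrow> (\<Sum>i=0..<r. Y p i * X i p') = (if p = p' then 1 else 0)"
  shows "r = m"
proof -
  have "real r = (\<Sum>i=0..<r. \<Sum>p=0..<m. X i p * Y p i)" using XY by simp
  also have "\<dots> = (\<Sum>p=0..<m. \<Sum>i=0..<r. Y p i * X i p)"
    by (subst sum.swap) (simp add: ac_simps)
  also have "\<dots> = real m" using YX by simp
  finally show ?thesis by simp
qed

section \<open>The transfer matrix of a spanning forest\<close>

locale spanning_forest_basis =
  fixes bd :: "'d::finite \<Rightarrow> 'e::finite \<Rightarrow> int" and V0 :: "'d set" and r :: nat and w :: "nat \<Rightarrow> 'd"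
  assumes forest: "spanning_forest bd V0" and w_bij: "bij_betw w {0..<r} V0"
begin

abbreviation D where "D \<equiv> Dchain bd V0"

definition transfer_mat :: "(nat \<Rightarrow> 'd) \<Rightarrow> real mat" where
  "transfer_mat f = mat r r (\<lambda>(i,p). D (f p) (w i))"

lemma transfer_mat_carrier [simp]: "transfer_mat f \<in> carrier_mat r r"
  unfolding transfer_mat_def by simp

lemma dim_transfer_mat [simp]: "dim_row (transfer_mat f) = r" "dim_col (transfer_mat f) = r"
  unfolding transfer_mat_def by simp_all

lemma D_supported: "supported_on (D e) V0"
  using Dchain_supported_rbdry[OF forest] by blast

lemma D_rbdry: "rbdry bd (D e) = rbdry bd (cell_chain e)"
  using Dchain_supported_rbdry[OF forest] by blast

lemma w_in: "i < r \<Longrightarrow> w i \<in> V0"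
  using w_bij unfolding bij_betw_def by auto

lemma D_w: "i < r \<Longrightarrow> D (w i) = cell_chain (w i)"
  using Dchain_cell_chain[OF forest w_in] .

lemma cell_chain_w: "i < r \<Longrightarrow> j < r \<Longrightarrow> cell_chain (w j) (w i) = (if i = j then 1 else 0)"
  using w_bij unfolding cell_chain_def bij_betw_def inj_on_def by auto

lemma card_V0: "card V0 = r"
  using w_bij bij_betw_same_card by fastforce

lemma supported_on_V0_eqI:
  assumes "supported_on x V0" "supported_on y V0" "\<And>i. i < r \<Longrightarrow> x (w i) = y (w i)"
  shows "x = y"
proof
  fix s show "x s = y s"
  proof (cases "s \<in> V0")
    case True
    then obtain i where "i < r" "s = w i" using w_bij unfolding bij_betw_def by auto
    then show ?thesis using assms by simp
  next
    case False
    then show ?thesis using assms(1,2) supported_onD by metis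
  qed
qed

lemma D_expand_w: "D e = (\<lambda>s. \<Sum>i=0..<r. D e (w i) * D (w i) s)"
  using chain_expand_cells[OF w_bij D_supported[of e]] by (simp add: D_w)

lemma transfer_mat_mult_vec:
  "i < r \<Longrightarrow> (transfer_mat f *\<^sub>v vec r a) $ i = (\<Sum>p=0..<r. a p * D (f p) (w i))"
  unfolding transfer_mat_def by (simp add: scalar_prod_def ac_simps)

lemma rbdry_sum_D:
  "rbdry bd (\<lambda>s. \<Sum>x\<in>X. a x * D (g x) s) = rbdry bd (\<lambda>s. \<Sum>x\<in>X. a x * cell_chain (g x) s)"
  unfolding rbdry_sum D_rbdry ..

lemma supported_on_sum_D: "supported_on (\<lambda>s. \<Sum>p=0..<r. a p * D (f p) s) V0"
  using D_supported unfolding supported_on_def by simp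

text \<open>If \<open>f\<close> enumerates \<open>V\<close>, the chain \<open>\<Sum>\<^sub>p a\<^sub>p f\<^sub>p\<close> on \<open>V\<close> has the same boundary as the chain
  \<open>\<Sum>\<^sub>p a\<^sub>p D(f\<^sub>p)\<close> on \<open>V0\<close>, whose coordinates are \<open>transfer_mat f *\<^sub>v a\<close>. As the boundary map is
  injective on chains of \<open>V0\<close> with the full boundary space as image, the boundary map on chains of \<open>V\<close>
  has these properties iff \<open>transfer_mat f\<close> is invertible.\<close>

lemma spanning_forest_imp_det_transfer_mat_nonzero:
  assumes V: "spanning_forest bd V" and f: "bij_betw f {0..<r} V"
  shows "det (transfer_mat f) \<noteq> 0"
proof
  assume "det (transfer_mat f) = 0"
  then obtain v where v: "v \<in> carrier_vec r" "v \<noteq> 0\<^sub>v r" "transfer_mat f *\<^sub>v v = 0\<^sub>v r"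
    using det_0_iff_vec_prod_zero_field[OF transfer_mat_carrier] by blast
  define a where "a p = v $ p" for p
  have va: "vec r a = v" using v(1) unfolding a_def by auto
  have coords: "(\<Sum>p=0..<r. a p * D (f p) (w i)) = 0" if "i < r" for i
    using transfer_mat_mult_vec[OF that, of f a] v(3) that by (simp add: va)
  have "(\<lambda>s. \<Sum>p=0..<r. a p * D (f p) s) = (\<lambda>s. 0)"
    by (rule supported_on_V0_eqI[OF supported_on_sum_D]) (simp_all add: supported_on_def coords)
  then have "rbdry bd (\<lambda>s. \<Sum>p=0..<r. a p * cell_chain (f p) s) = rbdry bd (\<lambda>s. 0)"
    unfolding rbdry_sum_D[symmetric] by simp
  moreover have "supported_on (\<lambda>s. \<Sum>p=0..<r. a p * cell_chain (f p) s) V"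
    using f by (intro supported_on_sum_cell_chain) (auto simp: bij_betw_def)
  ultimately have "(\<lambda>s. \<Sum>p=0..<r. a p * cell_chain (f p) s) = (\<lambda>s. 0)"
    using spanning_forest_unique[OF V] by (auto simp: supported_on_def)
  then have "a p = 0" if "p < r" for p
    using sum_cell_chain_apply[of f r p a] f that unfolding bij_betw_def by metis
  then have "v = 0\<^sub>v r" using v(1) unfolding a_def by (intro eq_vecI) auto
  then show False using v(2) by simp
qed

lemma det_transfer_mat_nonzero_imp_rbdry_eq_0:
  assumes d: "det (transfer_mat f) \<noteq> 0" and f: "bij_betw f {0..<r} V"
    and c: "supported_on c V" "rbdry bd c = (\<lambda>t. 0)"
  shows "c = (\<lambda>s. 0)"
proof -
  define a where "a p = c (f p)" for p
  have c_eq: "(\<lambda>s. \<Sum>p=0..<r. a p * cell_chain (f p) s) = c"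
    unfolding a_def by (rule chain_expand_cells[OF f c(1)])
  have rb: "rbdry bd (\<lambda>s. \<Sum>p=0..<r. a p * D (f p) s) = rbdry bd (\<lambda>s. 0)"
    unfolding rbdry_sum_D c_eq c(2) rbdry_zero ..
  have "(\<lambda>s. \<Sum>p=0..<r. a p * D (f p) s) = (\<lambda>s. 0)"
    by (rule spanning_forest_unique[OF forest supported_on_sum_D _ rb]) (simp add: supported_on_def)
  then have "(\<Sum>p=0..<r. a p * D (f p) (w i)) = 0" for i
    by (simp add: fun_eq_iff)
  then have "(transfer_mat f *\<^sub>v vec r a) $ i = 0\<^sub>v r $ i" if "i < r" for i
    using transfer_mat_mult_vec[OF that, of f a] that by simp
  then have "transfer_mat f *\<^sub>v vec r a = 0\<^sub>v r"
    by (intro eq_vecI) simp_all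
  then have "vec r a = 0\<^sub>v r"
    using det_0_iff_vec_prod_zero_field[OF transfer_mat_carrier, of f] d by (meson vec_carrier)
  then have "a p = 0" if "p < r" for p
    using that by (metis index_vec index_zero_vec(1))
  then show ?thesis using c_eq by auto
qed

lemma det_transfer_mat_nonzero_imp_rbdry_onto:
  assumes d: "det (transfer_mat f) \<noteq> 0" and f: "bij_betw f {0..<r} V"
  shows "rbdry bd x \<in> rbdry bd ` {c. supported_on c V}"
proof -
  obtain y where y: "supported_on y V0" "rbdry bd y = rbdry bd x"
    using spanning_forest_obtain[OF forest] .
  obtain v where v: "v \<in> carrier_vec r" "transfer_mat f *\<^sub>v v = vec r (\<lambda>i. y (w i))"
    using det_nonzero_imp_solvable[OF transfer_mat_carrier d vec_carrier] by blast
  define a where "a p = v $ p" for p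
  have "vec r a = v" unfolding a_def by (rule eq_vecI) (use v(1) in auto)
  then have coords: "(\<Sum>p=0..<r. a p * D (f p) (w i)) = y (w i)" if "i < r" for i
    using transfer_mat_mult_vec[OF that, of f a] v(2) that by simp
  have "(\<lambda>s. \<Sum>p=0..<r. a p * D (f p) s) = y"
    by (rule supported_on_V0_eqI[OF supported_on_sum_D y(1) coords])
  then have "rbdry bd (\<lambda>s. \<Sum>p=0..<r. a p * cell_chain (f p) s) = rbdry bd x"
    unfolding rbdry_sum_D[symmetric] using y(2) by simp
  moreover have "supported_on (\<lambda>s. \<Sum>p=0..<r. a p * cell_chain (f p) s) V"
    using f by (intro supported_on_sum_cell_chain) (auto simp: bij_betw_def)
  ultimately show ?thesis by (metis (mono_tags, lifting) image_eqI mem_Collect_eq)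
qed

lemma det_transfer_mat_nonzero_imp_spanning_forest:
  assumes d: "det (transfer_mat f) \<noteq> 0" and f: "bij_betw f {0..<r} V"
  shows "spanning_forest bd V"
  unfolding spanning_forest_def
proof
  show "inj_on (rbdry bd) {c. supported_on c V}"
  proof (rule inj_onI)
    fix c1 c2 assume c: "c1 \<in> {c. supported_on c V}" "c2 \<in> {c. supported_on c V}" "rbdry bd c1 = rbdry bd c2"
    have "(\<lambda>s. c1 s - c2 s) = (\<lambda>s. 0)"
      by (rule det_transfer_mat_nonzero_imp_rbdry_eq_0[OF d f])
        (use c in \<open>auto simp: supported_on_def rbdry_diff\<close>)
    then show "c1 = c2" by (simp add: fun_eq_iff)
  qed
  show "rbdry bd ` {c. supported_on c V} = rbdry bd ` UNIV"
    using det_transfer_mat_nonzero_imp_rbdry_onto[OF d f] by blast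
qed

lemma det_transfer_mat_nonzero_iff:
  "bij_betw f {0..<r} V \<Longrightarrow> det (transfer_mat f) \<noteq> 0 \<longleftrightarrow> spanning_forest bd V"
  using spanning_forest_imp_det_transfer_mat_nonzero det_transfer_mat_nonzero_imp_spanning_forest by blast

lemma abs_det_transfer_mat_reindex:
  "bij_betw f {0..<r} V \<Longrightarrow> bij_betw g {0..<r} V \<Longrightarrow> \<bar>det (transfer_mat g)\<bar> = \<bar>det (transfer_mat f)\<bar>"
  unfolding transfer_mat_def by (rule abs_det_mat_cols_reindex)

lemma det_transfer_mat_w: "det (transfer_mat w) = 1"
proof -
  have "transfer_mat w = 1\<^sub>m r"
    unfolding transfer_mat_def by (rule eq_matI) (auto simp: D_w cell_chain_w)
  then show ?thesis by simp
qed

lemma det_transfer_mat_col_lincomb: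
  assumes p0: "p0 < r" and X: "finite X" and f: "D (f p0) = (\<lambda>s. \<Sum>x\<in>X. a x * D (g x) s)"
  shows "det (transfer_mat f) = (\<Sum>x\<in>X. a x * det (transfer_mat (f(p0 := g x))))"
proof -
  have "transfer_mat f =
      mat r r (\<lambda>(i,j). if j = p0 then \<Sum>x\<in>X. a x * D (g x) (w i) else D (f j) (w i))"
    unfolding transfer_mat_def by (rule mat_cong) (auto simp: f)
  moreover have "mat r r (\<lambda>(i,j). if j = p0 then D (g x) (w i) else D (f j) (w i)) =
      transfer_mat (f(p0 := g x))" for x
    unfolding transfer_mat_def by (rule mat_cong) auto
  ultimately show ?thesis
    using det_mat_col_lincomb[OF p0 X, of a "\<lambda>x i. D (g x) (w i)" "\<lambda>i j. D (f j) (w i)"] by simp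
qed

lemma spanning_forest_card:
  assumes V: "spanning_forest bd V"
  shows "card V = r"
proof -
  obtain g where g: "bij_betw g {0..<card V} V"
    using finite_same_card_bij[of "{0..<card V}" V] by auto
  have "\<forall>i. \<exists>c. supported_on c V \<and> rbdry bd c = rbdry bd (cell_chain (w i))"
    by (meson spanning_forest_obtain[OF V])
  then obtain F where F: "\<And>i. supported_on (F i) V" "\<And>i. rbdry bd (F i) = rbdry bd (cell_chain (w i))"
    by metis
  show ?thesis
  proof (rule eq_of_mutually_inverse_matrices[symmetric])
    fix i i' assume i: "i < r" "i' < r"
    have "(\<lambda>s. \<Sum>p=0..<card V. F i' (g p) * D (g p) s) = cell_chain (w i')"
    proof (rule spanning_forest_unique[OF forest _ supported_on_cell_chain[OF w_in[OF i(2)]]])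
      show "supported_on (\<lambda>s. \<Sum>p=0..<card V. F i' (g p) * D (g p) s) V0"
        using D_supported by (auto simp: supported_on_def)
      show "rbdry bd (\<lambda>s. \<Sum>p=0..<card V. F i' (g p) * D (g p) s) = rbdry bd (cell_chain (w i'))"
        unfolding rbdry_sum_D chain_expand_cells[OF g F(1)] F(2) ..
    qed
    from fun_cong[OF this, of "w i"]
    show "(\<Sum>p=0..<card V. D (g p) (w i) * F i' (g p)) = (if i = i' then 1 else 0)"
      using i by (simp add: cell_chain_w ac_simps)
  next
    fix p p' assume p: "p < card V" "p' < card V"
    have gp': "g p' \<in> V" using g p unfolding bij_betw_def by auto
    have "(\<lambda>s. \<Sum>i=0..<r. D (g p') (w i) * F i s) = cell_chain (g p')"
    proof (rule spanning_forest_unique[OF V _ supported_on_cell_chain[OF gp']])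
      show "supported_on (\<lambda>s. \<Sum>i=0..<r. D (g p') (w i) * F i s) V"
        using F(1) by (auto simp: supported_on_def)
      have "rbdry bd (\<lambda>s. \<Sum>i=0..<r. D (g p') (w i) * F i s) =
          rbdry bd (\<lambda>s. \<Sum>i=0..<r. D (g p') (w i) * cell_chain (w i) s)"
        unfolding rbdry_sum F(2) ..
      then show "rbdry bd (\<lambda>s. \<Sum>i=0..<r. D (g p') (w i) * F i s) = rbdry bd (cell_chain (g p'))"
        unfolding chain_expand_cells[OF w_bij D_supported] D_rbdry .
    qed
    from fun_cong[OF this, of "g p"]
    have "(\<Sum>i=0..<r. D (g p') (w i) * F i (g p)) = cell_chain (g p') (g p)" .
    moreover have "g p = g p' \<longleftrightarrow> p = p'"
      using g p by (auto simp: bij_betw_def inj_on_def)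
    ultimately show "(\<Sum>i=0..<r. F i (g p) * D (g p') (w i)) = (if p = p' then 1 else 0)"
      by (simp add: cell_chain_def mult.commute)
  qed
qed

end

section \<open>Cosets of lattices of integral chains\<close>

definition int_submodule :: "('e \<Rightarrow> int) set \<Rightarrow> bool" where
  "int_submodule G \<longleftrightarrow> (\<lambda>t. 0) \<in> G \<and> (\<forall>b1\<in>G. \<forall>b2\<in>G. \<forall>m::int. (\<lambda>t. b1 t + m * b2 t) \<in> G)"

definition int_coset :: "('e \<Rightarrow> int) set \<Rightarrow> ('e \<Rightarrow> int) \<Rightarrow> ('e \<Rightarrow> int) set" where
  "int_coset G y = {y'. (\<lambda>t. y t - y' t) \<in> G}"

definition int_span_insert :: "('e \<Rightarrow> int) set \<Rightarrow> ('e \<Rightarrow> int) \<Rightarrow> ('e \<Rightarrow> int) set" where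
  "int_span_insert G x = {(\<lambda>t. b t + m * x t) | b m. b \<in> G}"

lemma int_submodule_zero: "int_submodule G \<Longrightarrow> (\<lambda>t. 0) \<in> G"
  unfolding int_submodule_def by blast

lemma int_submodule_lincomb: "int_submodule G \<Longrightarrow> b1 \<in> G \<Longrightarrow> b2 \<in> G \<Longrightarrow> (\<lambda>t. b1 t + m * b2 t) \<in> G"
  unfolding int_submodule_def by blast

lemma int_submodule_scale: "int_submodule G \<Longrightarrow> b \<in> G \<Longrightarrow> (\<lambda>t. m * b t) \<in> G"
  using int_submodule_lincomb[of G "\<lambda>t. 0" b m] int_submodule_zero[of G] by simp

lemma int_submodule_add: "int_submodule G \<Longrightarrow> b1 \<in> G \<Longrightarrow> b2 \<in> G \<Longrightarrow> (\<lambda>t. b1 t + b2 t) \<in> G"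
  using int_submodule_lincomb[of G b1 b2 1] by simp

lemma int_submodule_diff: "int_submodule G \<Longrightarrow> b1 \<in> G \<Longrightarrow> b2 \<in> G \<Longrightarrow> (\<lambda>t. b1 t - b2 t) \<in> G"
  using int_submodule_lincomb[of G b1 b2 "-1"] by simp

lemma int_submodule_minus: "int_submodule G \<Longrightarrow> (\<lambda>t. y t - y' t) \<in> G \<Longrightarrow> (\<lambda>t. y' t - y t) \<in> G"
  using int_submodule_scale[of G "\<lambda>t. y t - y' t" "-1"] by simp

lemma int_coset_eq_iff:
  assumes G: "int_submodule G"
  shows "int_coset G y = int_coset G y' \<longleftrightarrow> (\<lambda>t. y t - y' t) \<in> G"
proof
  assume "int_coset G y = int_coset G y'"
  moreover have "y' \<in> int_coset G y'" unfolding int_coset_def using int_submodule_zero[OF G] by simp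
  ultimately show "(\<lambda>t. y t - y' t) \<in> G" unfolding int_coset_def by auto
next
  assume h: "(\<lambda>t. y t - y' t) \<in> G"
  have "z \<in> int_coset G y \<longleftrightarrow> z \<in> int_coset G y'" for z
    using int_submodule_diff[OF G _ h, of "\<lambda>t. y t - z t"] int_submodule_add[OF G h, of "\<lambda>t. y' t - z t"]
    unfolding int_coset_def by auto
  then show "int_coset G y = int_coset G y'" by blast
qed

lemma quotient_eq_int_cosets: "A // {(x, y). (\<lambda>t. x t - y t) \<in> G} = int_coset G ` A"
  unfolding quotient_def int_coset_def by auto

lemma int_coset_self: "int_submodule G \<Longrightarrow> y \<in> int_coset G y"
  unfolding int_coset_def using int_submodule_zero by simp

lemma int_coset_eq_of_mem: "int_submodule G \<Longrightarrow> y' \<in> int_coset G y \<Longrightarrow> int_coset G y' = int_coset G y"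
  unfolding int_coset_eq_iff by (rule int_submodule_minus) (simp_all add: int_coset_def)

lemma int_submodule_span_insert:
  assumes B: "int_submodule B"
  shows "int_submodule (int_span_insert B x)"
  unfolding int_submodule_def
proof (intro conjI ballI allI)
  show "(\<lambda>t. 0) \<in> int_span_insert B x"
    unfolding int_span_insert_def using int_submodule_zero[OF B] by force
  fix b1 b2 m assume "b1 \<in> int_span_insert B x" "b2 \<in> int_span_insert B x"
  then obtain c1 m1 c2 m2 where c: "c1 \<in> B" "c2 \<in> B"
    "b1 = (\<lambda>t. c1 t + m1 * x t)" "b2 = (\<lambda>t. c2 t + m2 * x t)"
    unfolding int_span_insert_def by blast
  have "(\<lambda>t. b1 t + m * b2 t) = (\<lambda>t. (c1 t + m * c2 t) + (m1 + m * m2) * x t)"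
    unfolding c by (simp add: algebra_simps)
  then show "(\<lambda>t. b1 t + m * b2 t) \<in> int_span_insert B x"
    unfolding int_span_insert_def using int_submodule_lincomb[OF B c(1,2)]
    by (intro CollectI exI[of _ "\<lambda>t. c1 t + m * c2 t"] exI[of _ "m1 + m * m2"]) simp
qed

lemma subset_int_span_insert: "B \<subseteq> int_span_insert B x"
  unfolding int_span_insert_def by (force intro: exI[of _ 0])

lemma int_coset_subset_span_insert: "int_coset B y \<subseteq> int_coset (int_span_insert B x) y"
  using subset_int_span_insert unfolding int_coset_def by blast

lemma multiple_in_int_span_insert: "int_submodule B \<Longrightarrow> (\<lambda>t. m * x t) \<in> int_span_insert B x"
  unfolding int_span_insert_def using int_submodule_zero by force

lemma int_cosets_in_coset_eq:
  fixes n :: nat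
  assumes B: "int_submodule B" and n: "0 < n" "(\<lambda>t. int n * x t) \<in> B"
    and L: "\<And>y m. y \<in> L \<Longrightarrow> (\<lambda>t. y t + m * x t) \<in> L" and y0: "y0 \<in> L"
  shows "{Q \<in> int_coset B ` L. Q \<subseteq> int_coset (int_span_insert B x) y0} =
    (\<lambda>m. int_coset B (\<lambda>t. y0 t + int m * x t)) ` {0..<n}"
    (is "_ = ?g ` _")
proof (intro equalityI subsetI)
  fix Q assume "Q \<in> {Q \<in> int_coset B ` L. Q \<subseteq> int_coset (int_span_insert B x) y0}"
  then obtain y where y: "y \<in> L" "Q = int_coset B y" "Q \<subseteq> int_coset (int_span_insert B x) y0" by blast
  then have "(\<lambda>t. y0 t - y t) \<in> int_span_insert B x"
    using int_coset_self[OF B, of y] unfolding int_coset_def by auto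
  then obtain b m where b: "b \<in> B" "(\<lambda>t. y t - y0 t) = (\<lambda>t. b t + m * x t)"
    using int_submodule_minus[OF int_submodule_span_insert[OF B]] unfolding int_span_insert_def by blast
  define k where "k = nat (m mod int n)"
  define q where "q = m div int n"
  have m: "m = q * int n + int k" unfolding k_def q_def using n(1) by simp
  have "(\<lambda>t. y t - (y0 t + int k * x t)) = (\<lambda>t. b t + q * (int n * x t))"
  proof
    fix t
    have "y t - y0 t = b t + q * (int n * x t) + int k * x t"
      using fun_cong[OF b(2), of t] unfolding m by (simp add: algebra_simps)
    then show "y t - (y0 t + int k * x t) = b t + q * (int n * x t)"
      by linarith
  qed
  then have "Q = ?g k"
    unfolding y(2) int_coset_eq_iff[OF B] using int_submodule_lincomb[OF B b(1) n(2)] by simp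
  moreover have "k < n" unfolding k_def using n(1) by (simp add: nat_less_iff)
  ultimately show "Q \<in> ?g ` {0..<n}" by auto
next
  fix Q assume "Q \<in> ?g ` {0..<n}"
  then obtain m where Q: "Q = ?g m" by auto
  have "(\<lambda>t. y0 t - z t) \<in> int_span_insert B x" if "z \<in> Q" for z
  proof -
    have "(\<lambda>t. (y0 t + int m * x t) - z t) \<in> int_span_insert B x"
      using that subset_int_span_insert unfolding Q int_coset_def by blast
    from int_submodule_diff[OF int_submodule_span_insert[OF B] this multiple_in_int_span_insert[OF B, of "int m"]]
    show ?thesis by simp
  qed
  then show "Q \<in> {Q \<in> int_coset B ` L. Q \<subseteq> int_coset (int_span_insert B x) y0}"
    using L[OF y0] unfolding Q int_coset_def by auto
qed

lemma inj_on_int_coset_multiples: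
  fixes n :: nat
  assumes B: "int_submodule B"
    and n_min: "\<And>m::nat. 0 < m \<Longrightarrow> m < n \<Longrightarrow> (\<lambda>t. int m * x t) \<notin> B"
  shows "inj_on (\<lambda>m. int_coset B (\<lambda>t. y t + int m * x t)) {0..<n}"
proof (rule inj_onI)
  have nat_diff: "(\<lambda>t. int (m1 - m2) * x t) \<in> B" if "(\<lambda>t. int m1 * x t - int m2 * x t) \<in> B" for m1 m2
  proof (cases "m2 \<le> m1")
    case True
    then show ?thesis using that by (simp add: left_diff_distrib)
  qed (use int_submodule_zero[OF B] in simp)
  fix m1 m2 assume m: "m1 \<in> {0..<n}" "m2 \<in> {0..<n}"
    "int_coset B (\<lambda>t. y t + int m1 * x t) = int_coset B (\<lambda>t. y t + int m2 * x t)"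
  then have "(\<lambda>t. int m1 * x t - int m2 * x t) \<in> B"
    unfolding int_coset_eq_iff[OF B] by simp
  then have "(\<lambda>t. int (m1 - m2) * x t) \<in> B" "(\<lambda>t. int (m2 - m1) * x t) \<in> B"
    using nat_diff int_submodule_minus[OF B, of "\<lambda>t. int m1 * x t" "\<lambda>t. int m2 * x t"] by blast+
  moreover have "m1 - m2 < n" "m2 - m1 < n" using m(1,2) by auto
  ultimately have "\<not> 0 < m1 - m2" "\<not> 0 < m2 - m1" using n_min by blast+
  then show "m1 = m2" by arith
qed

lemma card_int_cosets_in_coset:
  fixes n :: nat
  assumes B: "int_submodule B" and n: "0 < n" "(\<lambda>t. int n * x t) \<in> B"
    and n_min: "\<And>m::nat. 0 < m \<Longrightarrow> m < n \<Longrightarrow> (\<lambda>t. int m * x t) \<notin> B"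
    and L: "\<And>y m. y \<in> L \<Longrightarrow> (\<lambda>t. y t + m * x t) \<in> L" and y0: "y0 \<in> L"
  shows "card {Q \<in> int_coset B ` L. Q \<subseteq> int_coset (int_span_insert B x) y0} = n"
  using int_cosets_in_coset_eq[OF B n L y0]
    card_image[OF inj_on_int_coset_multiples[where n = n and y = y0, OF B n_min]] by simp

lemma card_int_cosets_span_insert:
  fixes n :: nat
  assumes B: "int_submodule B" and n: "0 < n" "(\<lambda>t. int n * x t) \<in> B"
    and n_min: "\<And>m::nat. 0 < m \<Longrightarrow> m < n \<Longrightarrow> (\<lambda>t. int m * x t) \<notin> B"
    and L: "\<And>y m. y \<in> L \<Longrightarrow> (\<lambda>t. y t + m * x t) \<in> L"
    and fin: "finite (int_coset B ` L)"
  shows "card (int_coset B ` L) = n * card (int_coset (int_span_insert B x) ` L)"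
proof -
  let ?N = "int_span_insert B x"
  have N: "int_submodule ?N" by (rule int_submodule_span_insert[OF B])
  note coarsen = int_coset_eq_of_mem[OF N] and refine = int_coset_subset_span_insert[of B _ x]
  have "\<Union>(int_coset ?N ` int_coset B y) = int_coset ?N y" for y
    using coarsen refine int_coset_self[OF B, of y] by blast
  then have coarse: "int_coset ?N ` L = (\<lambda>Q. \<Union>(int_coset ?N ` Q)) ` int_coset B ` L"
    by (simp add: image_image)
  have fibre: "{C \<in> int_coset ?N ` L. Q \<subseteq> C} = {int_coset ?N y}" if y: "y \<in> L" "Q = int_coset B y" for Q y
  proof -
    have "C = int_coset ?N y" if "C \<in> int_coset ?N ` L" "Q \<subseteq> C" for C
    proof -
      obtain y' where "C = int_coset ?N y'" using \<open>C \<in> int_coset ?N ` L\<close> by blast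
      moreover have "y \<in> C" using \<open>Q \<subseteq> C\<close> y(2) int_coset_self[OF B, of y] by blast
      ultimately show ?thesis using coarsen by blast
    qed
    then show ?thesis using y refine by blast
  qed
  have "card (int_coset B ` L) = (\<Sum>Q\<in>int_coset B ` L. 1)"
    by simp
  also have "\<dots> = (\<Sum>Q\<in>int_coset B ` L. card {C \<in> int_coset ?N ` L. Q \<subseteq> C})"
  proof (rule sum.cong[OF refl])
    fix Q assume "Q \<in> int_coset B ` L"
    then obtain y where "y \<in> L" "Q = int_coset B y" by blast
    then show "1 = card {C \<in> int_coset ?N ` L. Q \<subseteq> C}" using fibre by simp
  qed
  also have "\<dots> = n * card (int_coset ?N ` L)"
  proof (rule sum_multicount)
    show "finite (int_coset ?N ` L)" unfolding coarse using fin by simp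
    show "\<forall>C\<in>int_coset ?N ` L. card {Q \<in> int_coset B ` L. Q \<subseteq> C} = n"
      using card_int_cosets_in_coset[OF B n n_min L] by blast
  qed (rule fin)
  finally show ?thesis .
qed

section \<open>Torsion of spanning forests\<close>

lemma int_submodule_bounds_dm1: "int_submodule (bounds_dm1 bd V)"
  unfolding int_submodule_def
proof (intro conjI ballI allI)
  show "(\<lambda>t. 0) \<in> bounds_dm1 bd V"
    unfolding bounds_dm1_def by (rule CollectI, rule exI[of _ "\<lambda>s. 0"]) (auto simp: ibdry_def supported_on_def)
  fix b1 b2 and m :: int
  assume "b1 \<in> bounds_dm1 bd V" "b2 \<in> bounds_dm1 bd V"
  then obtain c1 c2 where c: "b1 = ibdry bd c1" "supported_on c1 V" "b2 = ibdry bd c2" "supported_on c2 V"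
    unfolding bounds_dm1_def by auto
  have "(\<lambda>t. b1 t + m * b2 t) = ibdry bd (\<lambda>s. 1 * c1 s + m * c2 s)"
    unfolding ibdry_lincomb c by simp
  moreover have "supported_on (\<lambda>s. 1 * c1 s + m * c2 s) V" using c unfolding supported_on_def by simp
  ultimately show "(\<lambda>t. b1 t + m * b2 t) \<in> bounds_dm1 bd V" unfolding bounds_dm1_def by blast
qed

lemma bounds_dm1_insert:
  assumes "s \<notin> V"
  shows "bounds_dm1 bd (insert s V) = int_span_insert (bounds_dm1 bd V) (bd s)"
proof (intro equalityI subsetI)
  fix u assume "u \<in> int_span_insert (bounds_dm1 bd V) (bd s)"
  then obtain c m where c: "u = (\<lambda>t. ibdry bd c t + m * bd s t)" "supported_on c V"
    unfolding int_span_insert_def bounds_dm1_def by auto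
  have "u = ibdry bd (\<lambda>s'. 1 * c s' + m * int_cell_chain s s')"
    unfolding ibdry_lincomb ibdry_int_cell_chain c by simp
  moreover have "supported_on (\<lambda>s'. 1 * c s' + m * int_cell_chain s s') (insert s V)"
    using c unfolding supported_on_def int_cell_chain_def by auto
  ultimately show "u \<in> bounds_dm1 bd (insert s V)" unfolding bounds_dm1_def by blast
next
  fix u assume "u \<in> bounds_dm1 bd (insert s V)"
  then obtain c where c: "u = ibdry bd c" "supported_on c (insert s V)"
    unfolding bounds_dm1_def by auto
  define c0 where "c0 = (\<lambda>s'. 1 * c s' + (- c s) * int_cell_chain s s')"
  have "supported_on c0 V" using c(2) unfolding c0_def supported_on_def int_cell_chain_def by auto
  moreover have "u = (\<lambda>t. ibdry bd c0 t + c s * bd s t)"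
    unfolding c0_def ibdry_lincomb ibdry_int_cell_chain c(1) by simp
  ultimately show "u \<in> int_span_insert (bounds_dm1 bd V) (bd s)"
    unfolding int_span_insert_def bounds_dm1_def by blast
qed

definition real_bounding_cycles :: "('d::finite \<Rightarrow> 'e::finite \<Rightarrow> int) \<Rightarrow> ('e \<Rightarrow> 'f \<Rightarrow> int) \<Rightarrow> ('e \<Rightarrow> int) set" where
  "real_bounding_cycles bd bd' = {z \<in> cycles_dm1 bd'. \<exists>c. rbdry bd c = (\<lambda>t. real_of_int (z t))}"

lemma real_bounding_cycles_add_bd:
  assumes chain_complex: "\<And>s u. (\<Sum>t\<in>UNIV. bd s t * bd' t u) = 0" and y: "y \<in> real_bounding_cycles bd bd'"
  shows "(\<lambda>t. y t + m * bd s t) \<in> real_bounding_cycles bd bd'"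
proof -
  obtain c where c: "rbdry bd c = (\<lambda>t. real_of_int (y t))" and y_cycle: "ibdry bd' y = (\<lambda>u. 0)"
    using y unfolding real_bounding_cycles_def cycles_dm1_def by auto
  have "rbdry bd (\<lambda>s'. 1 * c s' + real_of_int m * cell_chain s s') = (\<lambda>t. real_of_int (y t + m * bd s t))"
    unfolding rbdry_lincomb c rbdry_cell_chain by simp
  moreover have "ibdry bd' (\<lambda>t. 1 * y t + m * bd s t) = (\<lambda>u. 0)"
    unfolding ibdry_lincomb y_cycle using chain_complex unfolding ibdry_def by simp
  ultimately show ?thesis
    unfolding real_bounding_cycles_def cycles_dm1_def mult_1 by blast
qed

definition bd_abs_sum :: "('d::finite \<Rightarrow> 'e::finite \<Rightarrow> int) \<Rightarrow> int" where
  "bd_abs_sum bd = (\<Sum>s\<in>UNIV. \<Sum>t\<in>UNIV. \<bar>bd s t\<bar>)"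

lemma abs_rbdry_le:
  assumes x: "\<And>s. \<bar>x s\<bar> \<le> 1"
  shows "\<bar>rbdry bd x t\<bar> \<le> real_of_int (bd_abs_sum bd)"
proof -
  have "\<bar>rbdry bd x t\<bar> \<le> (\<Sum>s\<in>UNIV. \<bar>x s * real_of_int (bd s t)\<bar>)"
    unfolding rbdry_def by (rule sum_abs)
  also have "\<dots> \<le> (\<Sum>s\<in>UNIV. real_of_int (\<Sum>t'\<in>UNIV. \<bar>bd s t'\<bar>))"
  proof (rule sum_mono)
    fix s
    have "\<bar>bd s t\<bar> \<le> (\<Sum>t'\<in>UNIV. \<bar>bd s t'\<bar>)"
      using member_le_sum[of t UNIV "\<lambda>t'. \<bar>bd s t'\<bar>"] by simp
    then have "real_of_int \<bar>bd s t\<bar> \<le> real_of_int (\<Sum>t'\<in>UNIV. \<bar>bd s t'\<bar>)"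
      by linarith
    moreover have "\<bar>x s * real_of_int (bd s t)\<bar> \<le> real_of_int \<bar>bd s t\<bar>"
      using mult_right_mono[OF x, of "\<bar>real_of_int (bd s t)\<bar>" s] by (simp add: abs_mult)
    ultimately show "\<bar>x s * real_of_int (bd s t)\<bar> \<le> real_of_int (\<Sum>t'\<in>UNIV. \<bar>bd s t'\<bar>)"
      by linarith
  qed
  also have "\<dots> = real_of_int (bd_abs_sum bd)" unfolding bd_abs_sum_def by simp
  finally show ?thesis .
qed

lemma abs_diff_ibdry_floor_le:
  fixes bd :: "'d::finite \<Rightarrow> 'e::finite \<Rightarrow> int"
  assumes "rbdry bd c = (\<lambda>t. real_of_int (z t))"
  shows "\<bar>z t - ibdry bd (\<lambda>s. \<lfloor>c s\<rfloor>) t\<bar> \<le> bd_abs_sum bd"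
proof -
  have "rbdry bd (\<lambda>s. frac (c s)) = (\<lambda>t. real_of_int (z t - ibdry bd (\<lambda>s. \<lfloor>c s\<rfloor>) t))"
    unfolding frac_def rbdry_diff rbdry_of_int assms by simp
  moreover have "\<bar>frac x\<bar> \<le> 1" for x :: real
    using frac_ge_0[of x] frac_lt_1[of x] by simp
  then have "\<bar>rbdry bd (\<lambda>s. frac (c s)) t\<bar> \<le> real_of_int (bd_abs_sum bd)"
    by (rule abs_rbdry_le)
  ultimately have "\<bar>real_of_int (z t - ibdry bd (\<lambda>s. \<lfloor>c s\<rfloor>) t)\<bar> \<le> real_of_int (bd_abs_sum bd)"
    by simp
  then show ?thesis by (simp only: of_int_abs[symmetric] of_int_le_iff)
qed

lemma finite_bounded_int_funs: "finite {z :: 'e::finite \<Rightarrow> int. \<forall>t. \<bar>z t\<bar> \<le> M}"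
proof (rule finite_subset)
  show "{z :: 'e \<Rightarrow> int. \<forall>t. \<bar>z t\<bar> \<le> M} \<subseteq> Pi\<^sub>E UNIV (\<lambda>_. {-M..M})"
    by (auto simp: PiE_UNIV_domain Pi_def abs_le_iff) (metis minus_le_iff)
  show "finite (Pi\<^sub>E (UNIV::'e set) (\<lambda>_. {-M..M}))" by (rule finite_PiE) auto
qed

text \<open>With \<open>c\<close> on \<open>V\<close> and \<open>\<partial>c = z\<close>, the fractional parts of the coefficients of \<open>m c\<close> repeat for two
  values of \<open>m\<close>, since their boundaries are integral and bounded; the difference of the two
  multiples of \<open>c\<close> is integral.\<close>

lemma int_multiple_in_bounds_dm1:
  fixes bd :: "'d::finite \<Rightarrow> 'e::finite \<Rightarrow> int"
  assumes V: "spanning_forest bd V" and z: "rbdry bd c = (\<lambda>t. real_of_int (z t))"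
  shows "\<exists>k>0. (\<lambda>t. k * z t) \<in> bounds_dm1 bd V"
proof -
  obtain c' where c': "supported_on c' V" "rbdry bd c' = (\<lambda>t. real_of_int (z t))"
    using spanning_forest_obtain[OF V, of c] z by metis
  define zz where "zz m = (\<lambda>t. int m * z t - ibdry bd (\<lambda>s. \<lfloor>real m * c' s\<rfloor>) t)" for m :: nat
  have scaled: "rbdry bd (\<lambda>s. real m * c' s) = (\<lambda>t. real_of_int (int m * z t))" for m
    unfolding rbdry_scale c' by simp
  have zz_bounded: "zz m \<in> {z. \<forall>t. \<bar>z t\<bar> \<le> bd_abs_sum bd}" for m
    using abs_diff_ibdry_floor_le[OF scaled[of m]] unfolding zz_def by simp
  have "\<not> inj zz"
    using finite_subset[OF _ finite_bounded_int_funs[of "bd_abs_sum bd"]] zz_bounded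
    by (metis finite_imageD image_subsetI infinite_UNIV_nat)
  then obtain a b where ab: "a < b" "zz a = zz b"
    unfolding inj_def by (metis linorder_neqE_nat)
  have "rbdry bd (\<lambda>s. frac (real m * c' s)) = (\<lambda>t. real_of_int (zz m t))" for m
    unfolding frac_def rbdry_diff rbdry_of_int rbdry_scale c' zz_def by simp
  then have "(\<lambda>s. frac (real a * c' s)) = (\<lambda>s. frac (real b * c' s))"
    using V c'(1) ab(2) unfolding spanning_forest_def inj_on_def supported_on_def by auto
  then have ci: "(\<lambda>s. real_of_int (\<lfloor>real b * c' s\<rfloor> - \<lfloor>real a * c' s\<rfloor>)) = (\<lambda>s. real (b - a) * c' s)"
    using ab(1) by (auto simp: frac_def fun_eq_iff algebra_simps)
  have "(\<lambda>t. real_of_int (ibdry bd (\<lambda>s. \<lfloor>real b * c' s\<rfloor> - \<lfloor>real a * c' s\<rfloor>) t)) =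
      (\<lambda>t. real_of_int (int (b - a) * z t))"
    unfolding rbdry_of_int[symmetric] ci rbdry_scale c'(2) by simp
  then have "ibdry bd (\<lambda>s. \<lfloor>real b * c' s\<rfloor> - \<lfloor>real a * c' s\<rfloor>) = (\<lambda>t. int (b - a) * z t)"
    by (simp only: fun_eq_iff of_int_eq_iff) blast
  moreover have "supported_on (\<lambda>s. \<lfloor>real b * c' s\<rfloor> - \<lfloor>real a * c' s\<rfloor>) V"
    using c'(1) unfolding supported_on_def by simp
  ultimately show ?thesis
    using ab(1) unfolding bounds_dm1_def by (intro exI[of _ "int (b - a)"]) force
qed

lemma torsion_cycles_eq_real_bounding_cycles:
  fixes bd :: "'d::finite \<Rightarrow> 'e::finite \<Rightarrow> int"
  assumes V: "spanning_forest bd V"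
  shows "{z \<in> cycles_dm1 bd'. \<exists>k::int. k > 0 \<and> (\<lambda>t. k * z t) \<in> bounds_dm1 bd V} = real_bounding_cycles bd bd'"
proof (intro equalityI subsetI)
  fix z assume "z \<in> {z \<in> cycles_dm1 bd'. \<exists>k::int. k > 0 \<and> (\<lambda>t. k * z t) \<in> bounds_dm1 bd V}"
  then obtain k ci where z: "z \<in> cycles_dm1 bd'" "k > 0" "(\<lambda>t. k * z t) = ibdry bd ci"
    unfolding bounds_dm1_def by auto
  have "rbdry bd (\<lambda>s. (1 / real_of_int k) * real_of_int (ci s)) = (\<lambda>t. real_of_int (z t))"
    unfolding rbdry_scale rbdry_of_int z(3)[symmetric] using z(2) by simp
  then show "z \<in> real_bounding_cycles bd bd'" unfolding real_bounding_cycles_def using z(1) by blast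
next
  fix z assume "z \<in> real_bounding_cycles bd bd'"
  then show "z \<in> {z \<in> cycles_dm1 bd'. \<exists>k::int. k > 0 \<and> (\<lambda>t. k * z t) \<in> bounds_dm1 bd V}"
    using int_multiple_in_bounds_dm1[OF V] unfolding real_bounding_cycles_def by blast
qed

lemma torsion_order_eq_card_int_cosets:
  "spanning_forest bd V \<Longrightarrow>
    torsion_order bd bd' V = card (int_coset (bounds_dm1 bd V) ` real_bounding_cycles bd bd')"
  unfolding torsion_order_def quotient_eq_int_cosets torsion_cycles_eq_real_bounding_cycles ..

lemma finite_int_cosets_real_bounding_cycles:
  fixes bd :: "'d::finite \<Rightarrow> 'e::finite \<Rightarrow> int"
  assumes V: "spanning_forest bd V"
  shows "finite (int_coset (bounds_dm1 bd V) ` real_bounding_cycles bd bd')"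
proof (rule finite_subset)
  let ?B = "bounds_dm1 bd V" and ?Z = "{z. \<forall>t. \<bar>z t\<bar> \<le> bd_abs_sum bd}"
  show "int_coset ?B ` real_bounding_cycles bd bd' \<subseteq> int_coset ?B ` ?Z"
  proof
    fix Q assume "Q \<in> int_coset ?B ` real_bounding_cycles bd bd'"
    then obtain y c where y: "Q = int_coset ?B y" "rbdry bd c = (\<lambda>t. real_of_int (y t))"
      unfolding real_bounding_cycles_def by auto
    obtain c' where c': "supported_on c' V" "rbdry bd c' = (\<lambda>t. real_of_int (y t))"
      using spanning_forest_obtain[OF V, of c] y(2) by metis
    define y' where "y' = (\<lambda>t. y t - ibdry bd (\<lambda>s. \<lfloor>c' s\<rfloor>) t)"
    have "(\<lambda>t. y t - y' t) \<in> ?B"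
      unfolding y'_def bounds_dm1_def using c'(1)
      by (intro CollectI exI[of _ "\<lambda>s. \<lfloor>c' s\<rfloor>"]) (simp add: supported_on_def)
    then have "Q = int_coset ?B y'"
      unfolding y(1) int_coset_eq_iff[OF int_submodule_bounds_dm1] .
    moreover have "y' \<in> ?Z" using abs_diff_ibdry_floor_le[OF c'(2)] unfolding y'_def by simp
    ultimately show "Q \<in> int_coset ?B ` ?Z" by blast
  qed
  show "finite (int_coset ?B ` ?Z)" using finite_bounded_int_funs by blast
qed

lemma torsion_order_pos:
  fixes bd :: "'d::finite \<Rightarrow> 'e::finite \<Rightarrow> int" and bd' :: "'e \<Rightarrow> 'f::finite \<Rightarrow> int"
  assumes V: "spanning_forest bd V"
  shows "0 < torsion_order bd bd' V"
proof -
  have "(\<lambda>t. 0) \<in> real_bounding_cycles bd bd'"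
    unfolding real_bounding_cycles_def cycles_dm1_def ibdry_def using rbdry_zero by auto
  then show ?thesis
    unfolding torsion_order_eq_card_int_cosets[OF V]
    using finite_int_cosets_real_bounding_cycles[OF V] by (auto simp: card_gt_0_iff)
qed

definition bd_order :: "('d::finite \<Rightarrow> 'e::finite \<Rightarrow> int) \<Rightarrow> 'd set \<Rightarrow> 'd \<Rightarrow> nat" where
  "bd_order bd V e = (LEAST n. 0 < n \<and> (\<lambda>t. int n * bd e t) \<in> bounds_dm1 bd V)"

lemma bd_order_pos_mem:
  assumes "spanning_forest bd V"
  shows "0 < bd_order bd V e" "(\<lambda>t. int (bd_order bd V e) * bd e t) \<in> bounds_dm1 bd V"
proof -
  obtain k where "k > 0" "(\<lambda>t. k * bd e t) \<in> bounds_dm1 bd V"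
    using int_multiple_in_bounds_dm1[OF assms rbdry_cell_chain] by blast
  then have "\<exists>n. 0 < n \<and> (\<lambda>t. int n * bd e t) \<in> bounds_dm1 bd V"
    by (intro exI[of _ "nat k"]) simp
  from LeastI_ex[OF this] show "0 < bd_order bd V e" "(\<lambda>t. int (bd_order bd V e) * bd e t) \<in> bounds_dm1 bd V"
    unfolding bd_order_def by simp_all
qed

lemma bd_order_le: "0 < n \<Longrightarrow> (\<lambda>t. int n * bd e t) \<in> bounds_dm1 bd V \<Longrightarrow> bd_order bd V e \<le> n"
  unfolding bd_order_def by (rule Least_le) simp

lemma card_int_cosets_insert:
  fixes bd :: "'d::finite \<Rightarrow> 'e::finite \<Rightarrow> int"
  assumes chain_complex: "\<And>s u. (\<Sum>t\<in>UNIV. bd s t * bd' t u) = 0"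
    and V: "spanning_forest bd V" and s: "s \<notin> V"
  shows "card (int_coset (bounds_dm1 bd V) ` real_bounding_cycles bd bd') =
    bd_order bd V s * card (int_coset (bounds_dm1 bd (insert s V)) ` real_bounding_cycles bd bd')"
  unfolding bounds_dm1_insert[OF s]
proof (rule card_int_cosets_span_insert[OF int_submodule_bounds_dm1 bd_order_pos_mem[OF V]])
  show "(\<lambda>t. int m * bd s t) \<notin> bounds_dm1 bd V" if "0 < m" "m < bd_order bd V s" for m
    using bd_order_le[of m] that by fastforce
  show "(\<lambda>t. y t + m * bd s t) \<in> real_bounding_cycles bd bd'" if "y \<in> real_bounding_cycles bd bd'" for y m
    by (rule real_bounding_cycles_add_bd[OF chain_complex that])
  show "finite (int_coset (bounds_dm1 bd V) ` real_bounding_cycles bd bd')"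
    by (rule finite_int_cosets_real_bounding_cycles[OF V])
qed

lemma exchange_coeff_nonzero:
  assumes V2: "spanning_forest bd (insert e W)" and eW: "e \<notin> W" and ek: "e \<noteq> k"
    and c: "supported_on c (insert k W)" "rbdry bd c = rbdry bd (cell_chain e)"
  shows "c k \<noteq> 0"
proof
  assume "c k = 0"
  then have "supported_on c (insert e W)" using c(1) unfolding supported_on_def by auto
  then have "c = cell_chain e"
    using spanning_forest_unique[OF V2 _ supported_on_cell_chain c(2)] by simp
  then show False using supported_onD[OF c(1), of e] eW ek by (simp add: cell_chain_def)
qed

text \<open>If \<open>n \<partial>e = \<partial>c\<^sub>n\<close> with \<open>c\<^sub>n\<close> integral on \<open>W + k\<close>, then \<open>c\<^sub>n = n c\<close> and
  \<open>\<plusminus>(n e + c\<^sub>n(k) k - c\<^sub>n)\<close> is an integral chain on \<open>W + e\<close> with boundary \<open>\<bar>c\<^sub>n(k)\<bar> \<partial>k\<close>.\<close>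

lemma bd_multiple_exchange:
  fixes bd :: "'d::finite \<Rightarrow> 'e::finite \<Rightarrow> int"
  assumes V1: "spanning_forest bd (insert k W)" and eW: "e \<notin> W" and ek: "e \<noteq> k"
    and c: "supported_on c (insert k W)" "rbdry bd c = rbdry bd (cell_chain e)" and ck: "c k \<noteq> 0"
    and n: "0 < n" "(\<lambda>t. int n * bd e t) \<in> bounds_dm1 bd (insert k W)"
  shows "\<exists>m>0. real m = \<bar>c k\<bar> * real n \<and> (\<lambda>t. int m * bd k t) \<in> bounds_dm1 bd (insert e W)"
proof -
  obtain cn where cn: "(\<lambda>t. int n * bd e t) = ibdry bd cn" "supported_on cn (insert k W)"
    using n(2) unfolding bounds_dm1_def by auto
  have "rbdry bd (\<lambda>s. real_of_int (cn s)) = rbdry bd (\<lambda>s. real n * c s)"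
    unfolding rbdry_of_int cn(1)[symmetric] rbdry_scale c(2) rbdry_cell_chain by simp
  then have "(\<lambda>s. real_of_int (cn s)) = (\<lambda>s. real n * c s)"
    by (rule spanning_forest_unique[OF V1, rotated 2]) (use cn(2) c(1) in \<open>auto simp: supported_on_def\<close>)
  then have cnk: "real_of_int (cn k) = real n * c k" by (simp add: fun_eq_iff)
  define \<chi> where "\<chi> = (\<lambda>s. sgn (cn k) * ((int n * int_cell_chain e s + cn k * int_cell_chain k s) - cn s))"
  have "ibdry bd \<chi> = (\<lambda>t. \<bar>cn k\<bar> * bd k t)"
    unfolding \<chi>_def ibdry_scale ibdry_diff ibdry_lincomb ibdry_int_cell_chain cn(1)[symmetric]
    by (simp add: abs_sgn algebra_simps)
  moreover have "supported_on \<chi> (insert e W)"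
    using cn(2) unfolding \<chi>_def supported_on_def int_cell_chain_def by auto
  ultimately have "\<exists>c'. (\<lambda>t. \<bar>cn k\<bar> * bd k t) = ibdry bd c' \<and> supported_on c' (insert e W)"
    by metis
  then have "(\<lambda>t. int (nat \<bar>cn k\<bar>) * bd k t) \<in> bounds_dm1 bd (insert e W)"
    unfolding bounds_dm1_def by simp
  moreover have "real (nat \<bar>cn k\<bar>) = \<bar>c k\<bar> * real n" using cnk by (simp add: abs_mult)
  moreover have "0 < nat \<bar>cn k\<bar>" using cnk ck n(1) by auto
  ultimately show ?thesis by blast
qed

lemma bd_order_exchange:
  fixes bd :: "'d::finite \<Rightarrow> 'e::finite \<Rightarrow> int"
  assumes V1: "spanning_forest bd (insert k W)" and V2: "spanning_forest bd (insert e W)"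
    and kW: "k \<notin> W" and eW: "e \<notin> W" and ek: "e \<noteq> k"
    and c: "supported_on c (insert k W)" "rbdry bd c = rbdry bd (cell_chain e)"
  shows "real (bd_order bd (insert e W) k) = \<bar>c k\<bar> * real (bd_order bd (insert k W) e)"
proof -
  have ck: "c k \<noteq> 0" by (rule exchange_coeff_nonzero[OF V2 eW ek c])
  define c' where "c' = (\<lambda>s. (1 / c k) * (cell_chain e s - c s) + 1 * cell_chain k s)"
  have c': "supported_on c' (insert e W)" "rbdry bd c' = rbdry bd (cell_chain k)"
    using c ck unfolding c'_def rbdry_lincomb rbdry_diff supported_on_def cell_chain_def by auto
  have c'e: "c' e = 1 / c k"
    using supported_onD[OF c(1), of e] eW ek unfolding c'_def cell_chain_def by simp
  have c'e_nz: "c' e \<noteq> 0" using c'e ck by simp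
  obtain m where m: "0 < m" "real m = \<bar>c k\<bar> * real (bd_order bd (insert k W) e)"
      "(\<lambda>t. int m * bd k t) \<in> bounds_dm1 bd (insert e W)"
    using bd_multiple_exchange[OF V1 eW ek c ck bd_order_pos_mem[OF V1]] by blast
  have "real (bd_order bd (insert e W) k) \<le> real m" using bd_order_le[OF m(1,3)] by simp
  then have le1: "real (bd_order bd (insert e W) k) \<le> \<bar>c k\<bar> * real (bd_order bd (insert k W) e)"
    using m(2) by simp
  obtain m' where m': "0 < m'" "real m' = \<bar>c' e\<bar> * real (bd_order bd (insert e W) k)"
      "(\<lambda>t. int m' * bd e t) \<in> bounds_dm1 bd (insert k W)"
    using bd_multiple_exchange[OF V2 kW ek[symmetric] c' c'e_nz bd_order_pos_mem[OF V2]] by blast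
  have "real (bd_order bd (insert k W) e) \<le> real m'" using bd_order_le[OF m'(1,3)] by simp
  then have "\<bar>c k\<bar> * real (bd_order bd (insert k W) e) \<le> \<bar>c k\<bar> * real m'"
    by (rule mult_left_mono) simp
  also have "\<bar>c k\<bar> * real m' = real (bd_order bd (insert e W) k)"
    unfolding m'(2) c'e using ck by simp
  finally show ?thesis using le1 by linarith
qed

lemma torsion_order_exchange:
  fixes bd :: "'d::finite \<Rightarrow> 'e::finite \<Rightarrow> int"
  assumes chain_complex: "\<And>s u. (\<Sum>t\<in>UNIV. bd s t * bd' t u) = 0"
    and V1: "spanning_forest bd (insert k W)" and V2: "spanning_forest bd (insert e W)"
    and kW: "k \<notin> W" and eW: "e \<notin> W" and ek: "e \<noteq> k"
    and c: "supported_on c (insert k W)" "rbdry bd c = rbdry bd (cell_chain e)"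
  shows "real (torsion_order bd bd' (insert e W)) = \<bar>c k\<bar> * real (torsion_order bd bd' (insert k W))"
proof -
  have "e \<notin> insert k W" "k \<notin> insert e W" "insert k (insert e W) = insert e (insert k W)"
    using eW kW ek by auto
  then show ?thesis
    unfolding torsion_order_eq_card_int_cosets[OF V1] torsion_order_eq_card_int_cosets[OF V2]
      card_int_cosets_insert[OF chain_complex V1 \<open>e \<notin> insert k W\<close>]
      card_int_cosets_insert[OF chain_complex V2 \<open>k \<notin> insert e W\<close>]
    using bd_order_exchange[OF V1 V2 kW eW ek c] by simp
qed

section \<open>Torsion and the transfer determinant\<close>

context spanning_forest_basis
begin

lemma det_transfer_mat_nonzero_imp_inj: "det (transfer_mat f) \<noteq> 0 \<Longrightarrow> inj_on f {0..<r}"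
  using det_mat_cols_not_inj[of f r "\<lambda>i s. D s (w i)"] unfolding transfer_mat_def by blast

lemma exchange_into_V0:
  assumes V: "spanning_forest bd V" and f: "bij_betw f {0..<r} V" and p0: "p0 < r"
  obtains k where "k \<in> V0" "k \<notin> f ` ({0..<r} - {p0})"
    "bij_betw (f(p0 := k)) {0..<r} (insert k (f ` ({0..<r} - {p0})))"
    "spanning_forest bd (insert k (f ` ({0..<r} - {p0})))"
proof -
  have "det (transfer_mat f) = (\<Sum>x\<in>{0..<r}. D (f p0) (w x) * det (transfer_mat (f(p0 := w x))))"
    by (rule det_transfer_mat_col_lincomb[OF p0 finite_atLeastLessThan D_expand_w])
  moreover have "det (transfer_mat f) \<noteq> 0"
    by (rule spanning_forest_imp_det_transfer_mat_nonzero[OF V f])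
  ultimately obtain x where x: "x < r" "det (transfer_mat (f(p0 := w x))) \<noteq> 0"
    by (metis (no_types, lifting) atLeastLessThan_iff mult_zero_right sum.neutral)
  have inj: "inj_on (f(p0 := w x)) {0..<r}"
    by (rule det_transfer_mat_nonzero_imp_inj[OF x(2)])
  have "(f(p0 := w x)) ` {0..<r} =
      (if p0 \<in> {0..<r} then insert (w x) (f ` ({0..<r} - {p0})) else f ` {0..<r})"
    by (rule fun_upd_image)
  then have img: "(f(p0 := w x)) ` {0..<r} = insert (w x) (f ` ({0..<r} - {p0}))"
    using p0 by simp
  have "w x \<notin> f ` ({0..<r} - {p0})"
  proof
    assume "w x \<in> f ` ({0..<r} - {p0})"
    then obtain j where j: "j \<in> {0..<r} - {p0}" "w x = f j" by blast
    then have "(f(p0 := w x)) j = (f(p0 := w x)) p0" by simp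
    from inj_onD[OF inj this] show False using j p0 by simp
  qed
  moreover have "bij_betw (f(p0 := w x)) {0..<r} (insert (w x) (f ` ({0..<r} - {p0})))"
    using inj img unfolding bij_betw_def by blast
  moreover from this have "spanning_forest bd (insert (w x) (f ` ({0..<r} - {p0})))"
    using det_transfer_mat_nonzero_iff x(2) by blast
  ultimately show ?thesis using that w_in[OF x(1)] by blast
qed

lemma det_transfer_mat_exchange:
  assumes p0: "p0 < r" and f': "bij_betw f' {0..<r} V'"
    and c: "supported_on c V'" "rbdry bd c = rbdry bd (cell_chain (f p0))"
    and agree: "\<And>j. j \<noteq> p0 \<Longrightarrow> f j = f' j"
  shows "det (transfer_mat f) = c (f' p0) * det (transfer_mat f')"
proof -
  have "D (f p0) = (\<lambda>s. \<Sum>q\<in>{0..<r}. c (f' q) * D (f' q) s)"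
    by (rule Dchain_eqI[OF forest supported_on_sum_D])
      (unfold rbdry_sum_D chain_expand_cells[OF f' c(1)] c(2), rule refl)
  then have "det (transfer_mat f) = (\<Sum>q\<in>{0..<r}. c (f' q) * det (transfer_mat (f(p0 := f' q))))"
    by (rule det_transfer_mat_col_lincomb[OF p0 finite_atLeastLessThan])
  also have "\<dots> = (\<Sum>q\<in>{0..<r}. if q = p0 then c (f' p0) * det (transfer_mat f') else 0)"
  proof (rule sum.cong[OF refl])
    fix q assume q: "q \<in> {0..<r}"
    show "c (f' q) * det (transfer_mat (f(p0 := f' q))) =
        (if q = p0 then c (f' p0) * det (transfer_mat f') else 0)"
    proof (cases "q = p0")
      case True
      have "f(p0 := f' p0) = f'" using agree by (auto simp: fun_eq_iff)
      then show ?thesis using True by simp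
    next
      case False
      then have "\<not> inj_on (f(p0 := f' q)) {0..<r}"
        using q p0 agree[OF False] unfolding inj_on_def by force
      then show ?thesis using False det_transfer_mat_nonzero_imp_inj by auto
    qed
  qed
  also have "\<dots> = c (f' p0) * det (transfer_mat f')" using p0 by simp
  finally show ?thesis .
qed

text \<open>Induction on the number of cells of \<open>V\<close> outside \<open>V0\<close>: exchanging one of them for a cell of
  \<open>V0\<close> multiplies both the torsion and the determinant by the same coefficient \<open>\<bar>c k\<bar>\<close>.\<close>

lemma torsion_order_eq_abs_det_transfer_mat:
  fixes bd' :: "'e \<Rightarrow> 'f::finite \<Rightarrow> int"
  assumes chain_complex: "\<And>s u. (\<Sum>t\<in>UNIV. bd s t * bd' t u) = 0"
  shows "spanning_forest bd V \<Longrightarrow> bij_betw f {0..<r} V \<Longrightarrow>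
    real (torsion_order bd bd' V) = \<bar>det (transfer_mat f)\<bar> * real (torsion_order bd bd' V0)"
proof (induction "card (V - V0)" arbitrary: V f)
  case 0
  then have "V \<subseteq> V0" by auto
  moreover have "card V = card V0" using spanning_forest_card[OF "0.prems"(1)] card_V0 by simp
  ultimately have "V = V0" using card_subset_eq[of V0 V] by simp
  then show ?case
    using abs_det_transfer_mat_reindex[OF w_bij "0.prems"(2)[unfolded \<open>V = V0\<close>]] det_transfer_mat_w by simp
next
  case (Suc n)
  note V = Suc.prems(1) and f = Suc.prems(2)
  have "V - V0 \<noteq> {}" using Suc.hyps(2) by (metis card.empty nat.distinct(1))
  then obtain e where "e \<in> V" "e \<notin> V0" by blast
  then obtain p0 where p0: "p0 < r" "f p0 \<notin> V0"
    using f unfolding bij_betw_def by auto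
  define W where "W = f ` ({0..<r} - {p0})"
  obtain k where k: "k \<in> V0" "k \<notin> W" "bij_betw (f(p0 := k)) {0..<r} (insert k W)"
      "spanning_forest bd (insert k W)"
    using exchange_into_V0[OF V f p0(1)] unfolding W_def by blast
  have V_eq: "V = insert (f p0) W" and eW: "f p0 \<notin> W"
    using f p0(1) unfolding W_def bij_betw_def inj_on_def by auto
  have "insert k W - V0 = (V - V0) - {f p0}" using k(1) V_eq eW p0(2) by auto
  then have "n = card (insert k W - V0)" using Suc.hyps(2) V_eq p0(2) by simp
  note IH = Suc.hyps(1)[OF this k(4,3)]
  obtain c where c: "supported_on c (insert k W)" "rbdry bd c = rbdry bd (cell_chain (f p0))"
    using spanning_forest_obtain[OF k(4)] .
  have "det (transfer_mat f) = c k * det (transfer_mat (f(p0 := k)))"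
    using det_transfer_mat_exchange[where f = f, OF p0(1) k(3) c] by simp
  moreover have "real (torsion_order bd bd' V) = \<bar>c k\<bar> * real (torsion_order bd bd' (insert k W))"
    unfolding V_eq
    by (rule torsion_order_exchange[OF chain_complex k(4) V[unfolded V_eq] k(2) eW _ c])
      (use k(1) p0(2) in auto)
  ultimately show ?case using IH by (simp add: abs_mult)
qed

lemma enum_set_bij_card_r: "card (V :: 'd set) = r \<Longrightarrow> bij_betw (enum_set r V) {0..<r} V"
  by (rule enum_set_bij) auto

lemma det_transfer_mat_enum_set_spanning_forest:
  fixes bd' :: "'e \<Rightarrow> 'f::finite \<Rightarrow> int"
  assumes chain_complex: "\<And>s u. (\<Sum>t\<in>UNIV. bd s t * bd' t u) = 0" and V: "spanning_forest bd V"
  shows "(det (transfer_mat (enum_set r V)))\<^sup>2 = (real (torsion_order bd bd' V) / real (torsion_order bd bd' V0))\<^sup>2"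
proof -
  have "real (torsion_order bd bd' V) = \<bar>det (transfer_mat (enum_set r V))\<bar> * real (torsion_order bd bd' V0)"
    using torsion_order_eq_abs_det_transfer_mat[OF chain_complex V]
      enum_set_bij_card_r[OF spanning_forest_card[OF V]] .
  then show ?thesis using torsion_order_pos[OF forest, of bd'] by simp
qed

lemma det_transfer_mat_enum_set_not_spanning_forest:
  "card (V :: 'd set) = r \<Longrightarrow> \<not> spanning_forest bd V \<Longrightarrow> det (transfer_mat (enum_set r V)) = 0"
  using det_transfer_mat_nonzero_iff[OF enum_set_bij_card_r] by blast

lemma det_transfer_mat_enum_set_V0: "(det (transfer_mat (enum_set r V0)))\<^sup>2 = 1"
  using abs_det_transfer_mat_reindex[OF w_bij enum_set_bij_card_r[OF card_V0]] det_transfer_mat_w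
  by (metis abs_1 power2_abs power_one)

section \<open>The characteristic polynomial of the mesh matrix\<close>

definition coord_mat :: "nat \<Rightarrow> (nat \<Rightarrow> 'd) \<Rightarrow> real mat" where
  "coord_mat N en = mat r N (\<lambda>(i,a). D (en a) (w i))"

lemma coord_mat_carrier [simp]: "coord_mat N en \<in> carrier_mat r N"
  unfolding coord_mat_def by simp

lemma dim_coord_mat [simp]: "dim_row (coord_mat N en) = r" "dim_col (coord_mat N en) = N"
  unfolding coord_mat_def by simp_all

lemma cinner_D: "cinner (D x) (D y) = (\<Sum>i=0..<r. D x (w i) * D y (w i))"
proof -
  have "cinner (D x) (D y) = (\<Sum>s\<in>V0. D x s * D y s)"
    unfolding cinner_def by (rule sum.mono_neutral_right) (auto simp: supported_onD[OF D_supported])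
  also have "\<dots> = (\<Sum>i=0..<r. D x (w i) * D y (w i))"
    using sum.reindex_bij_betw[OF w_bij, of "\<lambda>s. D x s * D y s"] by simp
  finally show ?thesis .
qed

lemma Mesh_sharp_geom_eq: "Mesh_sharp_geom bd V0 N en = (coord_mat N en)\<^sup>T * coord_mat N en"
  by (rule eq_matI) (auto simp: Mesh_sharp_geom_def coord_mat_def cinner_D scalar_prod_def)

lemma cinner_zcycle:
  assumes "x \<notin> V0" "y \<notin> V0"
  shows "cinner (zcycle bd V0 x) (zcycle bd V0 y) = (if x = y then 1 else 0) + cinner (D x) (D y)"
proof -
  have "cinner (zcycle bd V0 x) (zcycle bd V0 y) =
      (\<Sum>s\<in>UNIV. cell_chain x s * cell_chain y s) - (\<Sum>s\<in>UNIV. cell_chain x s * D y s)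
      - (\<Sum>s\<in>UNIV. D x s * cell_chain y s) + cinner (D x) (D y)"
    unfolding cinner_def zcycle_def by (simp add: algebra_simps sum.distrib sum_subtractf)
  then show ?thesis
    unfolding sum_cell_chain_left sum_cell_chain_right
    using supported_onD[OF D_supported assms(1)] supported_onD[OF D_supported assms(2)]
    by (simp add: cell_chain_def)
qed

lemma Mesh_geom_eq:
  assumes en: "inj_on en {..<N}" "en ` {..<N} \<subseteq> UNIV - V0"
  shows "Mesh_geom bd V0 N en = 1\<^sub>m N + Mesh_sharp_geom bd V0 N en"
proof (rule eq_matI)
  fix a b assume "a < dim_row (1\<^sub>m N + Mesh_sharp_geom bd V0 N en)" "b < dim_col (1\<^sub>m N + Mesh_sharp_geom bd V0 N en)"
  then have ab: "a < N" "b < N" by (auto simp: Mesh_sharp_geom_def)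
  then have "en a = en b \<longleftrightarrow> a = b" "en a \<notin> V0" "en b \<notin> V0"
    using en unfolding inj_on_def by auto
  then show "Mesh_geom bd V0 N en $$ (a, b) = (1\<^sub>m N + Mesh_sharp_geom bd V0 N en) $$ (a, b)"
    using ab by (simp add: Mesh_geom_def Mesh_sharp_geom_def cinner_zcycle)
qed (auto simp: Mesh_geom_def Mesh_sharp_geom_def)

lemma det_char_gram_eq_sum_subsets:
  assumes en: "bij_betw en {..<N} (UNIV - V0)"
  shows "det (U \<cdot>\<^sub>m 1\<^sub>m r - coord_mat N en * (coord_mat N en)\<^sup>T) =
    (\<Sum>V\<in>{V. card V = r}. (det (transfer_mat (enum_set r V)))\<^sup>2 * (U ^ (r - card (V - V0)) * (-1) ^ card (V - V0)))"
proof -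
  define \<delta> where "\<delta> s = (if s \<in> V0 then U else -1)" for s
  have "(\<Sum>s\<in>UNIV. D s (w i) * \<delta> s * D s (w k)) =
      (U \<cdot>\<^sub>m 1\<^sub>m r - coord_mat N en * (coord_mat N en)\<^sup>T) $$ (i, k)" if ik: "i < r" "k < r" for i k
  proof -
    have "(\<Sum>s\<in>V0. D s (w i) * \<delta> s * D s (w k)) = (\<Sum>j=0..<r. D (w j) (w i) * U * D (w j) (w k))"
      using sum.reindex_bij_betw[OF w_bij, of "\<lambda>s. D s (w i) * \<delta> s * D s (w k)"] w_in by (simp add: \<delta>_def)
    also have "\<dots> = (if i = k then U else 0)"
      using ik by (simp add: D_w cell_chain_w if_distrib[of "\<lambda>x. x * _"] sum.If_cases)
    finally have V0_part: "(\<Sum>s\<in>V0. D s (w i) * \<delta> s * D s (w k)) = (if i = k then U else 0)" .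
    have "(\<Sum>s\<in>UNIV - V0. D s (w i) * \<delta> s * D s (w k)) =
        (\<Sum>a<N. D (en a) (w i) * \<delta> (en a) * D (en a) (w k))"
      using sum.reindex_bij_betw[OF en, of "\<lambda>s. D s (w i) * \<delta> s * D s (w k)"] by (simp only:)
    also have "\<dots> = (\<Sum>a<N. - (D (en a) (w i) * D (en a) (w k)))"
      using en by (auto simp: \<delta>_def bij_betw_def intro!: sum.cong)
    finally show ?thesis
      using sum.subset_diff[of V0 UNIV "\<lambda>s. D s (w i) * \<delta> s * D s (w k)"] V0_part ik
      by (simp add: coord_mat_def scalar_prod_def sum_negf lessThan_atLeast0)
  qed
  then have "U \<cdot>\<^sub>m 1\<^sub>m r - coord_mat N en * (coord_mat N en)\<^sup>T =
      mat r r (\<lambda>(i,k). \<Sum>s\<in>UNIV. D s (w i) * \<delta> s * D s (w k))"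
    by (intro eq_matI) simp_all
  then have "det (U \<cdot>\<^sub>m 1\<^sub>m r - coord_mat N en * (coord_mat N en)\<^sup>T) =
      (\<Sum>V\<in>{V. card V = r}. (det (transfer_mat (enum_set r V)))\<^sup>2 * (\<Prod>s\<in>V. \<delta> s))"
    using cauchy_binet_gram[of UNIV r "\<lambda>i s. D s (w i)" \<delta>] by (simp add: transfer_mat_def)
  also have "\<dots> = (\<Sum>V\<in>{V. card V = r}. (det (transfer_mat (enum_set r V)))\<^sup>2 *
      (U ^ (r - card (V - V0)) * (-1) ^ card (V - V0)))"
  proof (rule sum.cong[OF refl])
    fix V :: "'d set" assume "V \<in> {V. card V = r}"
    then have "card (V \<inter> V0) = r - card (V - V0)"
      using card_Int_Diff[of V V0] by simp
    then show "(det (transfer_mat (enum_set r V)))\<^sup>2 * (\<Prod>s\<in>V. \<delta> s) =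
        (det (transfer_mat (enum_set r V)))\<^sup>2 * (U ^ (r - card (V - V0)) * (-1) ^ card (V - V0))"
      by (simp add: \<delta>_def prod.If_cases Int_def Diff_eq)
  qed
  finally show ?thesis .
qed

lemma det_char_Mesh_sharp_geom_nonzero:
  assumes en: "bij_betw en {..<N} (UNIV - V0)" and N: "N = card (UNIV - V0)" and U: "U \<noteq> 0"
  shows "det (U \<cdot>\<^sub>m 1\<^sub>m N - Mesh_sharp_geom bd V0 N en) =
    (\<Sum>V\<in>{V. card V = r}. (-1) ^ card (V - V0) * (det (transfer_mat (enum_set r V)))\<^sup>2 * U ^ (N - card (V - V0)))"
proof -
  let ?A = "coord_mat N en"
  have le: "card (V - V0) \<le> r" "card (V - V0) \<le> N" if "card V = r" for V :: "'d set"
    using that N card_mono[of V "V - V0"] card_mono[of "UNIV - V0" "V - V0"] by auto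
  have "U ^ r * det (U \<cdot>\<^sub>m 1\<^sub>m N - Mesh_sharp_geom bd V0 N en) = U ^ N * det (U \<cdot>\<^sub>m 1\<^sub>m r - ?A * ?A\<^sup>T)"
    unfolding Mesh_sharp_geom_eq by (rule det_sylvester[symmetric]) simp
  also have "\<dots> = U ^ r * (\<Sum>V\<in>{V. card V = r}.
      (-1) ^ card (V - V0) * (det (transfer_mat (enum_set r V)))\<^sup>2 * U ^ (N - card (V - V0)))"
    unfolding det_char_gram_eq_sum_subsets[OF en] sum_distrib_left
  proof (rule sum.cong[OF refl])
    fix V :: "'d set" assume "V \<in> {V. card V = r}"
    then have pow: "U ^ N * U ^ (r - card (V - V0)) = U ^ r * U ^ (N - card (V - V0))"
      using le[of V] by (simp add: power_add[symmetric] add.commute)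
    have "U ^ N * ((det (transfer_mat (enum_set r V)))\<^sup>2 * (U ^ (r - card (V - V0)) * (-1) ^ card (V - V0))) =
        (U ^ N * U ^ (r - card (V - V0))) * ((-1) ^ card (V - V0) * (det (transfer_mat (enum_set r V)))\<^sup>2)"
      by (simp only: ac_simps)
    also have "\<dots> = U ^ r * ((-1) ^ card (V - V0) * (det (transfer_mat (enum_set r V)))\<^sup>2 * U ^ (N - card (V - V0)))"
      unfolding pow by (simp only: ac_simps)
    finally show "U ^ N * ((det (transfer_mat (enum_set r V)))\<^sup>2 * (U ^ (r - card (V - V0)) * (-1) ^ card (V - V0))) =
        U ^ r * ((-1) ^ card (V - V0) * (det (transfer_mat (enum_set r V)))\<^sup>2 * U ^ (N - card (V - V0)))" .
  qed
  finally show ?thesis using U by simp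
qed

lemma det_char_Mesh_sharp_geom:
  assumes en: "bij_betw en {..<N} (UNIV - V0)" and N: "N = card (UNIV - V0)"
  shows "det (U \<cdot>\<^sub>m 1\<^sub>m N - Mesh_sharp_geom bd V0 N en) =
    (\<Sum>V\<in>{V. card V = r}. (-1) ^ card (V - V0) * (det (transfer_mat (enum_set r V)))\<^sup>2 * U ^ (N - card (V - V0)))"
    (is "?f U = ?g U")
proof (cases "U = 0")
  case True
  text \<open>Both sides are polynomials in \<open>U\<close> that agree for \<open>U \<noteq> 0\<close>.\<close>
  have "isCont ?f 0"
    by (rule isCont_det_char) (simp add: Mesh_sharp_geom_def)
  moreover have "isCont ?g 0"
    by (intro continuous_intros)
  ultimately have f: "?f \<midarrow>0\<rightarrow> ?f 0" and g: "?g \<midarrow>0\<rightarrow> ?g 0"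
    unfolding isCont_def by blast+
  have "\<forall>x. x \<noteq> 0 \<longrightarrow> ?f x = ?g x"
    using det_char_Mesh_sharp_geom_nonzero[OF en N] by blast
  from LIM_equal[OF this] f have "?g \<midarrow>0\<rightarrow> ?f 0" by blast
  then show ?thesis using LIM_unique[OF _ g] True by simp
qed (rule det_char_Mesh_sharp_geom_nonzero[OF en N])

lemma sum_subsets_eq_sum_spanning_forests:
  fixes bd' :: "'e \<Rightarrow> 'f::finite \<Rightarrow> int"
  assumes chain_complex: "\<And>s u. (\<Sum>t\<in>UNIV. bd s t * bd' t u) = 0" and N: "N = card (UNIV - V0)"
  shows "(\<Sum>V\<in>{V. card V = r}. (-1) ^ card (V - V0) * (det (transfer_mat (enum_set r V)))\<^sup>2 * U ^ (N - card (V - V0))) =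
    U ^ N + (\<Sum>j=1..N. (-1) ^ j *
      (\<Sum>V\<in>{V. spanning_forest bd V \<and> card (V \<inter> (UNIV - V0)) = j}.
        (real (torsion_order bd bd' V) / real (torsion_order bd bd' V0))\<^sup>2) * U ^ (N - j))"
proof -
  let ?sq = "\<lambda>V. (det (transfer_mat (enum_set r V)))\<^sup>2"
  let ?S = "\<lambda>j. {V \<in> {V. card V = r}. card (V - V0) = j}"
  have "(\<Sum>V\<in>{V. card V = r}. (-1) ^ card (V - V0) * ?sq V * U ^ (N - card (V - V0))) =
      (\<Sum>j\<in>{0..N}. \<Sum>V\<in>?S j. (-1) ^ card (V - V0) * ?sq V * U ^ (N - card (V - V0)))"
    by (rule sum.group[symmetric]) (use N in \<open>auto intro!: card_mono\<close>)
  also have "\<dots> = (\<Sum>j\<in>{0..N}. (-1) ^ j * (\<Sum>V\<in>?S j. ?sq V) * U ^ (N - j))"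
    by (auto simp: sum_distrib_left sum_distrib_right intro!: sum.cong)
  also have "\<dots> = (\<Sum>V\<in>?S 0. ?sq V) * U ^ N + (\<Sum>j=1..N. (-1) ^ j * (\<Sum>V\<in>?S j. ?sq V) * U ^ (N - j))"
    by (simp add: sum.atLeast_Suc_atMost)
  also have "?S 0 = {V0}"
    using card_V0 card_subset_eq[of V0] by auto
  also have "(\<Sum>j=1..N. (-1) ^ j * (\<Sum>V\<in>?S j. ?sq V) * U ^ (N - j)) =
      (\<Sum>j=1..N. (-1) ^ j * (\<Sum>V\<in>{V. spanning_forest bd V \<and> card (V \<inter> (UNIV - V0)) = j}.
        (real (torsion_order bd bd' V) / real (torsion_order bd bd' V0))\<^sup>2) * U ^ (N - j))"
  proof (rule sum.cong[OF refl])
    fix j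
    have "V \<inter> (UNIV - V0) = V - V0" for V :: "'d set" by blast
    then have "(\<Sum>V\<in>?S j. ?sq V) = (\<Sum>V\<in>{V. spanning_forest bd V \<and> card (V \<inter> (UNIV - V0)) = j}.
        (real (torsion_order bd bd' V) / real (torsion_order bd bd' V0))\<^sup>2)"
      using spanning_forest_card det_transfer_mat_enum_set_not_spanning_forest
        det_transfer_mat_enum_set_spanning_forest[OF chain_complex]
      by (intro sum.mono_neutral_cong_right) auto
    then show "(-1) ^ j * (\<Sum>V\<in>?S j. ?sq V) * U ^ (N - j) =
        (-1) ^ j * (\<Sum>V\<in>{V. spanning_forest bd V \<and> card (V \<inter> (UNIV - V0)) = j}.
          (real (torsion_order bd bd' V) / real (torsion_order bd bd' V0))\<^sup>2) * U ^ (N - j)"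
      by simp
  qed
  finally show ?thesis using det_transfer_mat_enum_set_V0 by simp
qed

end

theorem theorem8p2:
  fixes bd :: "'d::finite \<Rightarrow> 'e::finite \<Rightarrow> int"
    and bd' :: "'e \<Rightarrow> 'f::finite \<Rightarrow> int"
    and V0 :: "'d set"
    and N :: nat
    and en :: "nat \<Rightarrow> 'd"
  assumes chain_complex: "\<And>s u. (\<Sum>t\<in>UNIV. bd s t * bd' t u) = 0"
    and forest: "spanning_forest bd V0"
    and N_def: "N = card (UNIV - V0)"
    and enum: "bij_betw en {..<N} (UNIV - V0)"
  shows "\<forall>U::real.
     det ((U + 1) \<cdot>\<^sub>m 1\<^sub>m N - Mesh_geom bd V0 N en)
       = det (U \<cdot>\<^sub>m 1\<^sub>m N - Mesh_sharp_geom bd V0 N en)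
   \<and> det (U \<cdot>\<^sub>m 1\<^sub>m N - Mesh_sharp_geom bd V0 N en)
       = U ^ N + (\<Sum>j=1..N. (-1) ^ j *
           (\<Sum>V\<in>{V. spanning_forest bd V \<and> card (V \<inter> (UNIV - V0)) = j}.
              (real (torsion_order bd bd' V) / real (torsion_order bd bd' V0))\<^sup>2)
           * U ^ (N - j))"
proof (intro allI conjI)
  fix U :: real
  obtain w where "bij_betw w {0..<card V0} V0"
    using finite_same_card_bij[of "{0..<card V0}" V0] by auto
  then interpret spanning_forest_basis bd V0 "card V0" w
    using forest by unfold_locales
  have "Mesh_geom bd V0 N en = 1\<^sub>m N + Mesh_sharp_geom bd V0 N en"
    using enum by (intro Mesh_geom_eq) (auto simp: bij_betw_def)
  then show "det ((U + 1) \<cdot>\<^sub>m 1\<^sub>m N - Mesh_geom bd V0 N en) = det (U \<cdot>\<^sub>m 1\<^sub>m N - Mesh_sharp_geom bd V0 N en)"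
    by (intro arg_cong[where f = det] eq_matI) (auto simp: Mesh_sharp_geom_def algebra_simps)
  show "det (U \<cdot>\<^sub>m 1\<^sub>m N - Mesh_sharp_geom bd V0 N en) = U ^ N + (\<Sum>j=1..N. (-1) ^ j *
      (\<Sum>V\<in>{V. spanning_forest bd V \<and> card (V \<inter> (UNIV - V0)) = j}.
        (real (torsion_order bd bd' V) / real (torsion_order bd bd' V0))\<^sup>2) * U ^ (N - j))"
    unfolding det_char_Mesh_sharp_geom[OF enum N_def]
    by (rule sum_subsets_eq_sum_spanning_forests[OF chain_complex N_def])
qed

end
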